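(* Let $h\ge 3$ and let $m$ be a positive integer with $\omega=\omega(m)\ge 2$, and let $\varpi=\varpi(m)$. Then there are $\mathrm{CC}^h[m]$-circuits of size $2^{O(n^{1/((\omega-1)(h-2)+(\varpi-1))}\log n)}$ computing the $n$-ary conjunction $\mathrm{AND}_n$.
   Context: For an integer $m\ge 1$ and $A\subseteq\{0,\dots,m-1\}$, a gate $\mathrm{MOD}_m^A$ takes finitely many Boolean inputs (counted with multiplicity) and outputs $1$ if their sum modulo $m$ lies in $A$, and $0$ otherwise. A $\mathrm{CC}^h[m]$-circuit is a depth-$h$ Boolean circuit all of whose gates are of the form $\mathrm{MOD}_m^A$ ($A$ may vary between gates), with Boolean variable inputs and multiple wires allowed. The size of a circuit is its number of gates. $\omega(m)$ is the number of distinct prime divisors of $m$ and $\varpi(m)$ is the number of prime divisors $p$ of $m$ with $p\ge\omega(m)$. *)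

theory Defs
  imports Complex_Main "HOL-Library.Multiset" "HOL-Computational_Algebra.Primes"
begin

definition omega :: "nat \<Rightarrow> nat" where
  "omega m = card (prime_factors m)"

definition varpi :: "nat \<Rightarrow> nat" where
  "varpi m = card {p \<in> prime_factors m. p \<ge> omega m}"

text \<open>A wire feeding a gate: either an input variable x_j or the output of an
  earlier gate (gates are listed in topological order).\<close>
datatype wire = Var nat | Gate nat

text \<open>A MOD_m^A gate: accepting set A and the multiset of its input wires
  (multiple wires allowed).\<close>
record modgate =
  acc :: "nat set"
  ins :: "wire multiset"

type_synonym circuit = "modgate list"

fun wire_val :: "(nat \<Rightarrow> bool) \<Rightarrow> bool list \<Rightarrow> wire \<Rightarrow> nat" where
  "wire_val x vs (Var j) = (if x j then 1 else 0)"
| "wire_val x vs (Gate k) = (if k < length vs \<and> vs ! k then 1 else 0)"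

definition gate_out :: "nat \<Rightarrow> (nat \<Rightarrow> bool) \<Rightarrow> bool list \<Rightarrow> modgate \<Rightarrow> bool" where
  "gate_out m x vs g = ((\<Sum>\<^sub># (image_mset (wire_val x vs) (ins g))) mod m \<in> acc g)"

definition circ_vals :: "nat \<Rightarrow> circuit \<Rightarrow> (nat \<Rightarrow> bool) \<Rightarrow> bool list" where
  "circ_vals m C x = foldl (\<lambda>vs g. vs @ [gate_out m x vs g]) [] C"

definition circ_eval :: "nat \<Rightarrow> circuit \<Rightarrow> (nat \<Rightarrow> bool) \<Rightarrow> bool" where
  "circ_eval m C x = last (circ_vals m C x)"

fun wire_depth :: "nat list \<Rightarrow> wire \<Rightarrow> nat" where
  "wire_depth ds (Var j) = 0"
| "wire_depth ds (Gate k) = (if k < length ds then ds ! k else 0)"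

definition gate_depth :: "nat list \<Rightarrow> modgate \<Rightarrow> nat" where
  "gate_depth ds g = Suc (Max (insert 0 (wire_depth ds ` set_mset (ins g))))"

definition circ_depths :: "circuit \<Rightarrow> nat list" where
  "circ_depths C = foldl (\<lambda>ds g. ds @ [gate_depth ds g]) [] C"

definition circ_depth :: "circuit \<Rightarrow> nat" where
  "circ_depth C = Max (insert 0 (set (circ_depths C)))"

definition wf_circuit :: "nat \<Rightarrow> nat \<Rightarrow> circuit \<Rightarrow> bool" where
  "wf_circuit m n C \<longleftrightarrow> C \<noteq> [] \<and>
     (\<forall>i < length C. acc (C ! i) \<subseteq> {..<m} \<and>
        (\<forall>w \<in># ins (C ! i). (\<forall>j. w = Var j \<longrightarrow> j < n) \<and> (\<forall>k. w = Gate k \<longrightarrow> k < i)))"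

text \<open>A CC^h[m]-circuit on n inputs: depth-h circuit of MOD_m^A gates
  (depth at most h; equivalent to exactly h by padding with identity gates).\<close>
definition CC_circuit :: "nat \<Rightarrow> nat \<Rightarrow> nat \<Rightarrow> circuit \<Rightarrow> bool" where
  "CC_circuit h m n C \<longleftrightarrow> wf_circuit m n C \<and> circ_depth C \<le> h"

definition circ_size :: "circuit \<Rightarrow> nat" where
  "circ_size C = length C"

definition computes_AND :: "nat \<Rightarrow> nat \<Rightarrow> circuit \<Rightarrow> bool" where
  "computes_AND m n C \<longleftrightarrow> (\<forall>x. circ_eval m C x = (\<forall>j<n. x j))"

end

(* The inputs are grouped into a tree of blocks: a block of level l + 1 consists of B blocks of
   level l, where B = s^(w - 1) - 1 and w is the number of prime divisors of m.  For every block
   and every prime q dividing m we build an integer combination of MOD_m gates of depth l whose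
   value is divisible by q iff the block is all true.

   To go up one level, let N be the number of all-true subblocks.  For each prime r let d_r >= s
   be a power of r; the product of the d_r over any w - 1 primes exceeds B >= N, so N = B iff
   N = B (mod d_r) for all r different from q.  Modulo q, the indicator [N <> B (mod d_q)] is an
   integer combination of the binomial coefficients (N choose j), j < d_q, since these are
   d_q-periodic modulo q, and (N choose j) counts the j-sets K of all-true subblocks.  That all
   subblocks in K are all true, i.e. that r divides their values for all r <> q, is expressed
   modulo q by one layer of MOD_m gates through the identity
     Sum_{a in Z_r^K} ([Sum_k a_k F_k = 0 (mod r)] - [Sum_k a_k F_k = 1 (mod r)])
       = r^|K| [r divides every F_k],
   the conditions for the different primes r being merged into a single gate by Chinese
   remaindering.  A top gate tests divisibility by all primes.

   With h - 1 levels and s ~ n^(1/((w - 1)(h - 1))) the circuit has size (m s)^O(s).  Because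
   varpi(m) <= omega(m), the exponent (w - 1)(h - 1) is at least the one in the statement. *)

theory Submission
  imports Defs "HOL-Library.FuncSet" "HOL-Number_Theory.Cong"
begin

section \<open>Formulas of MOD gates and their circuits\<close>

datatype formula = Input nat | ModGate "nat set" "formula list"

fun eval_formula :: "nat \<Rightarrow> (nat \<Rightarrow> bool) \<Rightarrow> formula \<Rightarrow> bool" where
  "eval_formula m x (Input j) = x j"
| "eval_formula m x (ModGate A es) = ((\<Sum>e\<leftarrow>es. if eval_formula m x e then 1 else 0) mod m \<in> A)"

fun formula_depth :: "formula \<Rightarrow> nat" where
  "formula_depth (Input j) = 0"
| "formula_depth (ModGate A es) = Suc (foldr max (map formula_depth es) 0)"

fun formula_size :: "formula \<Rightarrow> nat" where
  "formula_size (Input j) = 0"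
| "formula_size (ModGate A es) = Suc (\<Sum>e\<leftarrow>es. formula_size e)"

fun formula_vars :: "formula \<Rightarrow> nat set" where
  "formula_vars (Input j) = {j}"
| "formula_vars (ModGate A es) = (\<Union>e\<in>set es. formula_vars e)"

fun is_gate :: "formula \<Rightarrow> bool" where
  "is_gate (Input j) = False"
| "is_gate (ModGate A es) = True"

fun gate_args :: "formula \<Rightarrow> formula list" where
  "gate_args (Input j) = []"
| "gate_args (ModGate A es) = es"

fun gate_acc :: "formula \<Rightarrow> nat set" where
  "gate_acc (Input j) = {}"
| "gate_acc (ModGate A es) = A"

fun postorder :: "formula \<Rightarrow> formula list" where
  "postorder (Input j) = []"
| "postorder (ModGate A es) = concat (map postorder es) @ [ModGate A es]"

lemma foldr_max_ge: "e \<in> set es \<Longrightarrow> f e \<le> foldr max (map f es) (0::nat)"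
  by (induction es) auto

lemma foldr_max_le: "(\<And>e. e \<in> set es \<Longrightarrow> f e \<le> l) \<Longrightarrow> foldr max (map f es) (0::nat) \<le> l"
  by (induction es) auto

definition topo_ordered :: "formula list \<Rightarrow> bool" where
  "topo_ordered S \<longleftrightarrow> (\<forall>i < length S. is_gate (S ! i) \<and>
      (\<forall>c \<in> set (gate_args (S ! i)). is_gate c \<longrightarrow> c \<in> set (take i S)))"

lemma topo_ordered_append:
  assumes "topo_ordered S1" "topo_ordered S2" shows "topo_ordered (S1 @ S2)"
  unfolding topo_ordered_def
proof (intro allI impI)
  fix i assume i: "i < length (S1 @ S2)"
  show "is_gate ((S1 @ S2) ! i) \<and>
    (\<forall>c\<in>set (gate_args ((S1 @ S2) ! i)). is_gate c \<longrightarrow> c \<in> set (take i (S1 @ S2)))"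
  proof (cases "i < length S1")
    case True
    then show ?thesis using assms(1) by (auto simp: topo_ordered_def nth_append)
  next
    case False
    define k where "k = i - length S1"
    have k: "k < length S2" "i = length S1 + k" using i False by (auto simp: k_def)
    have "set (take k S2) \<subseteq> set (take i (S1 @ S2))" using k by auto
    then show ?thesis using assms(2) k by (auto simp: topo_ordered_def nth_append)
  qed
qed

lemma topo_ordered_Nil: "topo_ordered []"
  by (simp add: topo_ordered_def)

lemma topo_ordered_concat: "(\<And>S. S \<in> set Ss \<Longrightarrow> topo_ordered S) \<Longrightarrow> topo_ordered (concat Ss)"
  by (induction Ss) (auto intro: topo_ordered_append simp: topo_ordered_Nil)

lemma topo_ordered_snoc:
  assumes "topo_ordered S" "is_gate g" "\<And>c. c \<in> set (gate_args g) \<Longrightarrow> is_gate c \<Longrightarrow> c \<in> set S"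
  shows "topo_ordered (S @ [g])"
  unfolding topo_ordered_def
proof (intro allI impI)
  fix i assume i: "i < length (S @ [g])"
  show "is_gate ((S @ [g]) ! i) \<and>
    (\<forall>c\<in>set (gate_args ((S @ [g]) ! i)). is_gate c \<longrightarrow> c \<in> set (take i (S @ [g])))"
  proof (cases "i < length S")
    case True
    then show ?thesis using assms(1) by (auto simp: topo_ordered_def nth_append)
  next
    case False
    then have "i = length S" using i by simp
    then show ?thesis using assms by (auto simp: nth_append)
  qed
qed

lemma last_postorder: "is_gate e \<Longrightarrow> postorder e \<noteq> [] \<and> last (postorder e) = e"
  by (cases e) auto

lemma topo_ordered_postorder: "topo_ordered (postorder e)"
proof (induction e)
  case (Input j)
  then show ?case by (simp add: topo_ordered_def)
next
  case (ModGate A es)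
  have args: "topo_ordered (concat (map postorder es))"
    by (rule topo_ordered_concat) (use ModGate in auto)
  have self: "c \<in> set (postorder c)" if "is_gate c" for c
    using last_postorder[OF that] by (metis last_in_set)
  show ?case
    unfolding postorder.simps by (rule topo_ordered_snoc[OF args]) (use self in fastforce)+
qed

lemma postorder_subformula:
  "g \<in> set (postorder e) \<Longrightarrow> formula_depth g \<le> formula_depth e \<and> formula_vars g \<subseteq> formula_vars e"
proof (induction e)
  case (Input j)
  then show ?case by simp
next
  case (ModGate A es)
  show ?case
  proof (cases "g = ModGate A es")
    case False
    then obtain c where "c \<in> set es" "g \<in> set (postorder c)" using ModGate.prems by auto
    then show ?thesis using ModGate.IH foldr_max_ge[of c es formula_depth] by fastforce
  qed simp
qed

lemma length_postorder: "length (postorder e) = formula_size e"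
  by (induction e) (auto simp: length_concat comp_def intro!: arg_cong[where f=sum_list])

text \<open>Equal subformulas have equal values, so each argument may be wired to the first gate
  of the postorder list that is equal to it.\<close>

definition wire_of :: "formula list \<Rightarrow> formula \<Rightarrow> wire" where
  "wire_of S c = (case c of Input j \<Rightarrow> Var j | ModGate A es \<Rightarrow> Gate (LEAST k. S ! k = c))"

definition compile_gate :: "nat \<Rightarrow> formula list \<Rightarrow> formula \<Rightarrow> modgate" where
  "compile_gate m S g = \<lparr>acc = gate_acc g \<inter> {..<m}, ins = mset (map (wire_of S) (gate_args g))\<rparr>"

definition compile :: "nat \<Rightarrow> formula \<Rightarrow> circuit" where
  "compile m e = map (compile_gate m (postorder e)) (postorder e)"

lemma circ_vals_snoc:
  "circ_vals m (C @ [g]) x = circ_vals m C x @ [gate_out m x (circ_vals m C x) g]"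
  by (simp add: circ_vals_def)

lemma length_circ_vals: "length (circ_vals m C x) = length C"
  by (induction C rule: rev_induct) (simp_all add: circ_vals_snoc, simp add: circ_vals_def)

lemma circ_vals_nth:
  "i < length C \<Longrightarrow> circ_vals m C x ! i = gate_out m x (take i (circ_vals m C x)) (C ! i)"
proof (induction C arbitrary: i rule: rev_induct)
  case (snoc g C)
  then show ?case
    by (cases "i < length C") (auto simp: circ_vals_snoc nth_append length_circ_vals)
qed simp

lemma circ_depths_snoc: "circ_depths (C @ [g]) = circ_depths C @ [gate_depth (circ_depths C) g]"
  by (simp add: circ_depths_def)

lemma length_circ_depths: "length (circ_depths C) = length C"
  by (induction C rule: rev_induct) (simp_all add: circ_depths_snoc, simp add: circ_depths_def)

lemma circ_depths_nth:
  "i < length C \<Longrightarrow> circ_depths C ! i = gate_depth (take i (circ_depths C)) (C ! i)"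
proof (induction C arbitrary: i rule: rev_induct)
  case (snoc g C)
  then show ?case
    by (cases "i < length C") (auto simp: circ_depths_snoc nth_append length_circ_depths)
qed simp

lemma topo_ordered_first_index:
  assumes "topo_ordered S" "i < length S" "c \<in> set (gate_args (S ! i))" "is_gate c"
  shows "(LEAST k. S ! k = c) < i \<and> S ! (LEAST k. S ! k = c) = c"
proof -
  have "c \<in> set (take i S)" using assms unfolding topo_ordered_def by blast
  then obtain k where k: "k < i" "S ! k = c" by (auto simp: in_set_conv_nth)
  then have "(LEAST k. S ! k = c) \<le> k" "S ! (LEAST k. S ! k = c) = c"
    by (auto intro: Least_le LeastI)
  then show ?thesis using k by simp
qed

lemma topo_ordered_nth_gate:
  assumes "topo_ordered S" "i < length S"
  obtains A es where "S ! i = ModGate A es"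
  using assms unfolding topo_ordered_def by (cases "S ! i") auto

lemma circ_vals_compile:
  assumes "m > 0" "i < length (postorder e)"
  shows "circ_vals m (compile m e) x ! i = eval_formula m x (postorder e ! i)"
  using assms(2)
proof (induction i rule: less_induct)
  case (less i)
  define S where "S = postorder e"
  define vs where "vs = circ_vals m (compile m e) x"
  have S: "topo_ordered S" "i < length S" using topo_ordered_postorder less S_def by auto
  have len: "length vs = length S" by (simp add: vs_def S_def length_circ_vals compile_def)
  obtain A es where g: "S ! i = ModGate A es" using topo_ordered_nth_gate[OF S] .
  have wire: "wire_val x (take i vs) (wire_of S c) = (if eval_formula m x c then 1 else 0)"
    if c: "c \<in> set es" for c
  proof (cases c)
    case (ModGate A' es')
    then have "(LEAST k. S ! k = c) < i" "S ! (LEAST k. S ! k = c) = c"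
      using topo_ordered_first_index[OF S] c g by auto
    then show ?thesis using less.IH S len ModGate by (simp add: wire_of_def vs_def S_def)
  qed (simp add: wire_of_def)
  have "(\<Sum>\<^sub># (image_mset (wire_val x (take i vs)) (mset (map (wire_of S) es))))
      = (\<Sum>c\<leftarrow>es. if eval_formula m x c then 1 else 0)"
    using wire by (induction es) auto
  moreover have "vs ! i = gate_out m x (take i vs) (compile_gate m S (S ! i))"
    using circ_vals_nth[of i "compile m e" m x] S by (simp add: vs_def compile_def S_def)
  ultimately show ?case using assms(1) g by (simp add: gate_out_def compile_gate_def vs_def S_def)
qed

lemma circ_depths_compile:
  assumes "i < length (postorder e)"
  shows "circ_depths (compile m e) ! i \<le> formula_depth (postorder e ! i)"
  using assms
proof (induction i rule: less_induct)
  case (less i)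
  define S where "S = postorder e"
  define ds where "ds = circ_depths (compile m e)"
  have S: "topo_ordered S" "i < length S" using topo_ordered_postorder less S_def by auto
  have len: "length ds = length S" by (simp add: ds_def S_def length_circ_depths compile_def)
  obtain A es where g: "S ! i = ModGate A es" using topo_ordered_nth_gate[OF S] .
  have wire: "wire_depth (take i ds) (wire_of S c) \<le> formula_depth c" if c: "c \<in> set es" for c
  proof (cases c)
    case (ModGate A' es')
    then have "(LEAST k. S ! k = c) < i" "S ! (LEAST k. S ! k = c) = c"
      using topo_ordered_first_index[OF S] c g by auto
    moreover have "ds ! (LEAST k. S ! k = c) \<le> formula_depth c"
      using less.IH[of "LEAST k. S ! k = c"] calculation S by (simp add: ds_def S_def)
    ultimately show ?thesis using S len ModGate by (simp add: wire_of_def)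
  qed (simp add: wire_of_def)
  have "ds ! i = gate_depth (take i ds) (compile_gate m S (S ! i))"
    using circ_depths_nth[of i "compile m e"] S by (simp add: ds_def compile_def S_def)
  also have "\<dots> \<le> formula_depth (S ! i)"
    unfolding gate_depth_def compile_gate_def g using wire foldr_max_ge[of _ es formula_depth]
    by (auto intro: order_trans)
  finally show ?case by (simp add: ds_def S_def)
qed

lemma wf_circuit_compile:
  assumes "is_gate e" "formula_vars e \<subseteq> {..<n}"
  shows "wf_circuit m n (compile m e)"
proof -
  have wire: "(\<forall>j. w = Var j \<longrightarrow> j < n) \<and> (\<forall>k. w = Gate k \<longrightarrow> k < i)"
    if i: "i < length (postorder e)" and g: "postorder e ! i = ModGate A es"
      and c: "c \<in> set es" "w = wire_of (postorder e) c" for i A es c w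
  proof -
    have "formula_vars c \<subseteq> formula_vars (postorder e ! i)" using c g by auto
    then have "formula_vars c \<subseteq> formula_vars e"
      using postorder_subformula[of "postorder e ! i" e] i by auto
    moreover have "is_gate c \<Longrightarrow> (LEAST k. postorder e ! k = c) < i"
      using topo_ordered_first_index[OF topo_ordered_postorder i] c g by auto
    ultimately show ?thesis using c assms(2) by (cases c) (auto simp: wire_of_def)
  qed
  have "acc (compile m e ! i) \<subseteq> {..<m} \<and> (\<forall>w \<in># ins (compile m e ! i).
      (\<forall>j. w = Var j \<longrightarrow> j < n) \<and> (\<forall>k. w = Gate k \<longrightarrow> k < i))"
    if "i < length (compile m e)" for i
  proof -
    have i: "i < length (postorder e)" using that by (simp add: compile_def)
    obtain A es where g: "postorder e ! i = ModGate A es"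
      using topo_ordered_nth_gate[OF topo_ordered_postorder i] .
    have "compile m e ! i = compile_gate m (postorder e) (ModGate A es)"
      using i g by (simp add: compile_def)
    then show ?thesis using wire[OF i g] by (auto simp: compile_gate_def)
  qed
  moreover have "compile m e \<noteq> []" using last_postorder[OF assms(1)] by (simp add: compile_def)
  ultimately show ?thesis unfolding wf_circuit_def by blast
qed

lemma circ_depth_compile: "circ_depth (compile m e) \<le> formula_depth e"
  unfolding circ_depth_def
proof (intro Max.boundedI)
  fix y assume "y \<in> insert 0 (set (circ_depths (compile m e)))"
  then consider "y = 0" | i where "i < length (postorder e)" "y = circ_depths (compile m e) ! i"
    by (auto simp: in_set_conv_nth length_circ_depths compile_def)
  then show "y \<le> formula_depth e"
  proof cases
    case (2 i)
    then have "y \<le> formula_depth (postorder e ! i)" using circ_depths_compile by simp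
    also have "\<dots> \<le> formula_depth e" using postorder_subformula 2 by simp
    finally show ?thesis .
  qed simp
qed simp_all

lemma circ_eval_compile:
  assumes "m > 0" "is_gate e"
  shows "circ_eval m (compile m e) x = eval_formula m x e"
proof -
  define S where "S = postorder e"
  have S: "S \<noteq> []" "last S = e" using last_postorder[OF assms(2)] S_def by auto
  have "length (circ_vals m (compile m e) x) = length S"
    by (simp add: length_circ_vals compile_def S_def)
  then have "circ_eval m (compile m e) x = circ_vals m (compile m e) x ! (length S - 1)"
    unfolding circ_eval_def using S by (metis last_conv_nth length_0_conv)
  also have "\<dots> = eval_formula m x e"
    using circ_vals_compile[OF assms(1)] S by (simp add: S_def last_conv_nth)
  finally show ?thesis .
qed

lemma compile_correct:
  assumes "m > 0" "is_gate e" "formula_vars e \<subseteq> {..<n}" "formula_depth e \<le> h"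
  shows "CC_circuit h m n (compile m e)"
    and "circ_eval m (compile m e) x = eval_formula m x e"
    and "circ_size (compile m e) = formula_size e"
  using wf_circuit_compile[OF assms(2,3)] circ_depth_compile[of m e] assms(4)
    circ_eval_compile[OF assms(1,2)]
  by (auto simp: CC_circuit_def circ_size_def compile_def length_postorder)

section \<open>Binomial coefficients, character sums and other arithmetic\<close>

lemma prime_dvd_choose_prime_power:
  fixes q :: nat
  assumes "prime q" "0 < i" "i < q ^ t"
  shows "q dvd (q ^ t choose i)"
proof (rule ccontr)
  assume nd: "\<not> q dvd (q ^ t choose i)"
  have "i * (q ^ t choose i) = q ^ t * ((q ^ t - 1) choose (i - 1))"
    using assms(2) by (rule times_binomial_minus1_eq)
  then have "q ^ t dvd i * (q ^ t choose i)" by simp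
  moreover have "coprime (q ^ t) (q ^ t choose i)"
    using nd assms(1) by (metis coprime_commute coprime_power_right_iff prime_imp_coprime)
  ultimately have "q ^ t dvd i" by (simp add: coprime_dvd_mult_left_iff)
  then show False using assms(2,3) by (simp add: nat_dvd_not_less)
qed

text \<open>By Vandermonde's identity, all terms but one of the expansion of
  \<open>(N + q^t) choose j\<close> are divisible by q.\<close>

lemma choose_add_prime_power_mod:
  fixes q :: nat
  assumes "prime q" "j < q ^ t"
  shows "((N + q ^ t) choose j) mod q = (N choose j) mod q"
proof -
  have "(N + q ^ t) choose j = (\<Sum>k\<le>j. (q ^ t choose k) * (N choose (j - k)))"
    by (subst add.commute) (rule vandermonde[symmetric])
  also have "\<dots> = (N choose j) + (\<Sum>k\<in>{1..j}. (q ^ t choose k) * (N choose (j - k)))"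
    by (simp add: atMost_atLeast0 sum.atLeast_Suc_atMost)
  finally have expand: "(N + q ^ t) choose j
      = (N choose j) + (\<Sum>k\<in>{1..j}. (q ^ t choose k) * (N choose (j - k)))" .
  have "q dvd (\<Sum>k\<in>{1..j}. (q ^ t choose k) * (N choose (j - k)))"
    using assms by (intro dvd_sum) (auto intro!: dvd_mult2 prime_dvd_choose_prime_power)
  then show ?thesis unfolding expand by (metis dvd_imp_mod_0 mod_add_right_eq add.right_neutral)
qed

lemma choose_mod_prime_periodic:
  fixes q :: nat
  assumes "prime q" "j < q ^ t"
  shows "(N choose j) mod q = ((N mod q ^ t) choose j) mod q"
proof -
  have "((N mod q ^ t + q ^ t * k) choose j) mod q = ((N mod q ^ t) choose j) mod q" for k
  proof (induction k)
    case (Suc k)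
    have "((N mod q ^ t + q ^ t * Suc k) choose j) mod q
        = ((N mod q ^ t + q ^ t * k + q ^ t) choose j) mod q"
      by (simp add: algebra_simps)
    also have "\<dots> = ((N mod q ^ t + q ^ t * k) choose j) mod q"
      by (rule choose_add_prime_power_mod[OF assms])
    finally show ?case using Suc.IH by simp
  qed simp
  from this[of "N div q ^ t"] show ?thesis by simp
qed

lemma binomial_interpolation:
  fixes g :: "nat \<Rightarrow> int"
  shows "\<exists>c. \<forall>N < M. g N = (\<Sum>j<M. c j * int (N choose j))"
proof (induction M)
  case (Suc M)
  then obtain c where c: "\<forall>N<M. g N = (\<Sum>j<M. c j * int (N choose j))" by blast
  define c' where "c' = c(M := g M - (\<Sum>j<M. c j * int (M choose j)))"
  have "g N = (\<Sum>j<Suc M. c' j * int (N choose j))" if "N < Suc M" for N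
  proof -
    have "(\<Sum>j<M. c' j * int (N choose j)) = (\<Sum>j<M. c j * int (N choose j))"
      by (intro sum.cong) (auto simp: c'_def)
    then show ?thesis using c that by (cases "N < M") (auto simp: c'_def less_Suc_eq)
  qed
  then show ?case by blast
qed simp

lemma sum_subsets_all:
  fixes Y :: "nat \<Rightarrow> bool"
  shows "(\<Sum>K | K \<subseteq> {..<B} \<and> card K = j. of_bool (\<forall>k\<in>K. Y k) :: int)
     = int (card {k. k < B \<and> Y k} choose j)"
proof -
  have "finite {K. K \<subseteq> {..<B} \<and> card K = j}"
    by (rule finite_subset[of _ "Pow {..<B}"]) auto
  then have "(\<Sum>K | K \<subseteq> {..<B} \<and> card K = j. of_bool (\<forall>k\<in>K. Y k) :: int)
      = int (card ({K. K \<subseteq> {..<B} \<and> card K = j} \<inter> {K. \<forall>k\<in>K. Y k}))"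
    by simp
  also have "{K. K \<subseteq> {..<B} \<and> card K = j} \<inter> {K. \<forall>k\<in>K. Y k} = {K. K \<subseteq> {k. k < B \<and> Y k} \<and> card K = j}"
    by auto
  also have "card \<dots> = card {k. k < B \<and> Y k} choose j"
    by (rule n_subsets) simp
  finally show ?thesis .
qed

lemma card_affine_congruence_solutions:
  fixes r :: nat and f z c :: int
  assumes "prime r" "\<not> int r dvd f"
  shows "card {y. y < r \<and> (int y * f + z) mod int r = c mod int r} = 1"
proof -
  have r: "r > 0" using assms(1) prime_gt_0_nat by blast
  have "coprime f (int r)"
    using assms by (metis coprime_commute prime_imp_coprime prime_nat_int_transfer)
  then obtain u where u: "[f * u = 1] (mod int r)" using cong_solve_coprime_int by blast
  define y0 where "y0 = nat (((c - z) * u) mod int r)"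
  have y0: "y0 < r" using r by (simp add: y0_def nat_less_iff)
  have "[int y0 * f + z = ((c - z) * u) * f + z] (mod int r)"
    unfolding y0_def using r by (intro cong_add cong_mult) (auto simp: cong_def)
  also have "((c - z) * u) * f + z = (c - z) * (f * u) + z"
    by (simp add: ac_simps)
  also have "[(c - z) * (f * u) + z = (c - z) * 1 + z] (mod int r)"
    by (intro cong_add cong_mult cong_refl u)
  finally have sol: "(int y0 * f + z) mod int r = c mod int r" by (simp add: cong_def)
  have "y = y0" if "y < r" "(int y * f + z) mod int r = c mod int r" for y
  proof -
    have "[int y * f + z = int y0 * f + z] (mod int r)" using that(2) sol by (simp add: cong_def)
    then have "[int y * f = int y0 * f] (mod int r)" using cong_add_rcancel by blast
    then have "int r dvd (int y - int y0) * f" by (simp add: cong_iff_dvd_diff left_diff_distrib)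
    then have "int r dvd (int y - int y0)"
      using assms by (metis prime_dvd_mult_iff prime_nat_int_transfer)
    moreover have "\<bar>int y - int y0\<bar> < int r" using that(1) y0 by linarith
    ultimately have "\<not> int y - int y0 \<noteq> 0"
      using dvd_imp_le_int[of "int y - int y0" "int r"] by linarith
    then show ?thesis by simp
  qed
  then have "{y. y < r \<and> (int y * f + z) mod int r = c mod int r} = {y0}"
    using y0 sol by blast
  then show ?thesis by simp
qed

text \<open>Fixing all coordinates but one on which the linear form is invertible, exactly one value
  of that coordinate satisfies the congruence.\<close>

lemma card_linear_congruence_solutions:
  fixes r :: nat and F :: "nat \<Rightarrow> int" and c :: int
  assumes "prime r" "finite K" "k0 \<in> K" "\<not> int r dvd F k0"
  shows "(\<Sum>a\<in>K \<rightarrow>\<^sub>E {..<r}. if (\<Sum>k\<in>K. int (a k) * F k) mod int r = c mod int r then 1 else 0 :: int)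
         = int r ^ (card K - 1)"
proof -
  define K' where "K' = K - {k0}"
  have K: "K = insert k0 K'" "k0 \<notin> K'" "finite K'" using assms K'_def by auto
  define h where "h a = (if (\<Sum>k\<in>K. int (a k) * F k) mod int r = c mod int r then 1 else 0 :: int)" for a
  have "(\<Sum>a\<in>K \<rightarrow>\<^sub>E {..<r}. h a) = (\<Sum>a\<in>(\<lambda>(y, g). g(k0 := y)) ` ({..<r} \<times> (K' \<rightarrow>\<^sub>E {..<r})). h a)"
    using K by (simp add: PiE_insert_eq)
  also have "\<dots> = (\<Sum>p\<in>{..<r} \<times> (K' \<rightarrow>\<^sub>E {..<r}). h ((\<lambda>(y, g). g(k0 := y)) p))"
    using K inj_combinator[of k0 K' "\<lambda>_. {..<r}"] by (intro sum.reindex[unfolded comp_def]) simp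
  also have "\<dots> = (\<Sum>y<r. \<Sum>g\<in>K' \<rightarrow>\<^sub>E {..<r}. h (g(k0 := y)))"
    by (simp add: sum.cartesian_product split_def)
  also have "\<dots> = (\<Sum>g\<in>K' \<rightarrow>\<^sub>E {..<r}. \<Sum>y<r. h (g(k0 := y)))"
    by (rule sum.swap)
  also have "\<dots> = (\<Sum>g\<in>K' \<rightarrow>\<^sub>E {..<r}. 1)"
  proof (intro sum.cong refl)
    fix g assume g: "g \<in> K' \<rightarrow>\<^sub>E {..<r}"
    define z where "z = (\<Sum>k\<in>K'. int (g k) * F k)"
    have "(\<Sum>k\<in>K. int ((g(k0 := y)) k) * F k) = int y * F k0 + z" for y
    proof -
      have "(\<Sum>k\<in>K'. int ((g(k0 := y)) k) * F k) = z"
        unfolding z_def using K by (intro sum.cong) auto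
      then show ?thesis using K by simp
    qed
    then have "(\<Sum>y<r. h (g(k0 := y)))
        = (\<Sum>y<r. if (int y * F k0 + z) mod int r = c mod int r then 1 else 0)"
      by (simp add: h_def)
    also have "\<dots> = int (card {y. y < r \<and> (int y * F k0 + z) mod int r = c mod int r})"
      by (simp add: sum.If_cases lessThan_def Collect_conj_eq Int_commute)
    finally have "(\<Sum>y<r. h (g(k0 := y)))
        = int (card {y. y < r \<and> (int y * F k0 + z) mod int r = c mod int r})" .
    then show "(\<Sum>y<r. h (g(k0 := y))) = 1"
      using card_affine_congruence_solutions[OF assms(1,4)] by simp
  qed
  also have "\<dots> = int r ^ (card K - 1)" using K by (simp add: card_PiE)
  finally show ?thesis by (simp add: h_def)
qed

lemma signed_count_linear_congruence:
  fixes r :: nat and F :: "nat \<Rightarrow> int"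
  assumes "prime r" "finite K"
  shows "(\<Sum>(a, b)\<in>(K \<rightarrow>\<^sub>E {..<r}) \<times> {0, 1}.
            (if b = 0 then 1 else -1) * of_bool ((\<Sum>k\<in>K. int (a k) * F k) mod int r = int b mod int r))
       = (if \<forall>k\<in>K. int r dvd F k then int r ^ card K else 0 :: int)"
proof -
  define S where "S a = (\<Sum>k\<in>K. int (a k) * F k) mod int r" for a
  have "(\<Sum>(a, b)\<in>(K \<rightarrow>\<^sub>E {..<r}) \<times> {0, 1}. (if b = 0 then 1 else -1) * of_bool (S a = int b mod int r))
      = (\<Sum>a\<in>K \<rightarrow>\<^sub>E {..<r}. \<Sum>b\<in>{0, 1}. (if b = 0 then 1 else -1) * of_bool (S a = int b mod int r) :: int)"
    by (rule sum.cartesian_product[symmetric])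
  also have "\<dots> = (\<Sum>a\<in>K \<rightarrow>\<^sub>E {..<r}. (if S a = 0 then 1 else 0) - (if S a = 1 then 1 else 0))"
    using prime_ge_2_nat[OF assms(1)] by (intro sum.cong refl) simp
  also have "\<dots> = (if \<forall>k\<in>K. int r dvd F k then int r ^ card K else 0)"
  proof (cases "\<forall>k\<in>K. int r dvd F k")
    case True
    then have "S a = 0" for a
      by (simp add: S_def dvd_sum)
    then show ?thesis using True assms(2) by (simp add: card_PiE)
  next
    case False
    then obtain k0 where k0: "k0 \<in> K" "\<not> int r dvd F k0" by blast
    have "(1::int) mod int r = 1" using prime_ge_2_nat[OF assms(1)] by auto
    then show ?thesis
      using card_linear_congruence_solutions[of r K k0 F 0, OF assms k0]
        card_linear_congruence_solutions[of r K k0 F 1, OF assms k0]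
      unfolding if_not_P[OF False] S_def by (simp add: sum_subtractf)
  qed
  finally show ?thesis unfolding S_def .
qed

lemma prod_dvd_of_pairwise_coprime:
  fixes f :: "'a \<Rightarrow> nat"
  assumes "finite A" "\<And>a b. a \<in> A \<Longrightarrow> b \<in> A \<Longrightarrow> a \<noteq> b \<Longrightarrow> coprime (f a) (f b)"
    and "\<And>a. a \<in> A \<Longrightarrow> f a dvd z"
  shows "prod f A dvd z"
  using assms
proof (induction A rule: finite_induct)
  case (insert a A)
  then have "coprime (f a) (prod f A)" by (intro prod_coprime_right) auto
  then show ?case using insert by (simp add: divides_mult)
qed simp

lemma sum_mod_cong:
  fixes f g :: "'a \<Rightarrow> int"
  assumes "\<And>a. a \<in> A \<Longrightarrow> f a mod q = g a mod q"
  shows "sum f A mod q = sum g A mod q"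
proof -
  have "sum f A mod q = (\<Sum>a\<in>A. f a mod q) mod q" by (simp add: mod_sum_eq)
  also have "\<dots> = (\<Sum>a\<in>A. g a mod q) mod q" using assms by (simp cong: sum.cong)
  also have "\<dots> = sum g A mod q" by (simp add: mod_sum_eq)
  finally show ?thesis .
qed

lemma mult_le_power_add: "a \<le> (X::nat) ^ i \<Longrightarrow> b \<le> X ^ j \<Longrightarrow> a * b \<le> X ^ (i + j)"
  by (simp add: mult_le_mono power_add)

lemma power_le_power_mult: "a \<le> (X::nat) ^ i \<Longrightarrow> a ^ k \<le> X ^ (i * k)"
  by (metis power_mono power_mult zero_le)

section \<open>Affine forms\<close>

text \<open>An affine form: a constant plus the number of true formulas in a list.\<close>

type_synonym lform = "formula list \<times> nat"

definition lform_val :: "nat \<Rightarrow> (nat \<Rightarrow> bool) \<Rightarrow> lform \<Rightarrow> int" where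
  "lform_val m x f = int (snd f) + (\<Sum>e\<leftarrow>fst f. of_bool (eval_formula m x e))"

definition lform_size :: "lform \<Rightarrow> nat" where
  "lform_size f = (\<Sum>e\<leftarrow>fst f. formula_size e)"

definition lform_scale :: "nat \<Rightarrow> lform \<Rightarrow> lform" where
  "lform_scale k f = (concat (replicate k (fst f)), k * snd f)"

definition list_of_set :: "'a set \<Rightarrow> 'a list" where
  "list_of_set A = (SOME xs. set xs = A \<and> distinct xs)"

definition lform_Sum :: "('a \<Rightarrow> lform) \<Rightarrow> 'a set \<Rightarrow> lform" where
  "lform_Sum F A = (concat (map (fst \<circ> F) (list_of_set A)), \<Sum>a\<in>A. snd (F a))"

text \<open>The coefficients are reduced modulo q, so the value is only determined modulo q.\<close>

definition lform_comb_mod :: "nat \<Rightarrow> ('a \<Rightarrow> int) \<Rightarrow> ('a \<Rightarrow> formula) \<Rightarrow> 'a set \<Rightarrow> lform" where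
  "lform_comb_mod q c g A = lform_Sum (\<lambda>a. lform_scale (nat (c a mod int q)) ([g a], 0)) A"

text \<open>The constant of the form is absorbed into the accepting set of the gate.\<close>

definition mod_gate :: "nat \<Rightarrow> (int \<Rightarrow> bool) \<Rightarrow> lform \<Rightarrow> formula" where
  "mod_gate m Pr f = ModGate {v. v < m \<and> Pr (int v + int (snd f))} (fst f)"

lemma list_of_set: "finite A \<Longrightarrow> set (list_of_set A) = A \<and> distinct (list_of_set A)"
  unfolding list_of_set_def by (rule someI_ex) (rule finite_distinct_list)

lemma sum_list_map_list_of_set: "finite A \<Longrightarrow> (\<Sum>a\<leftarrow>list_of_set A. f a) = sum f A"
  using list_of_set[of A] by (metis sum_list_distinct_conv_sum_set)

lemma sum_list_concat_map: "(\<Sum>y\<leftarrow>concat xss. f y) = (\<Sum>xs\<leftarrow>xss. \<Sum>y\<leftarrow>xs. f y)"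
  by (induction xss) auto

lemma lform_val_scale: "lform_val m x (lform_scale k f) = int k * lform_val m x f"
  by (induction k) (auto simp: lform_val_def lform_scale_def algebra_simps)

lemma lform_size_scale: "lform_size (lform_scale k f) = k * lform_size f"
  by (induction k) (auto simp: lform_size_def lform_scale_def)

lemma lform_val_Sum:
  "finite A \<Longrightarrow> lform_val m x (lform_Sum F A) = (\<Sum>a\<in>A. lform_val m x (F a))"
  by (simp add: lform_val_def lform_Sum_def sum_list_concat_map sum_list_map_list_of_set
      sum.distrib)

lemma lform_size_Sum:
  "finite A \<Longrightarrow> lform_size (lform_Sum F A) = (\<Sum>a\<in>A. lform_size (F a))"
  by (simp add: lform_size_def lform_Sum_def sum_list_concat_map sum_list_map_list_of_set)

lemma set_lform_scale: "set (fst (lform_scale k f)) \<subseteq> set (fst f)"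
  by (auto simp: lform_scale_def)

lemma set_lform_Sum: "finite A \<Longrightarrow> set (fst (lform_Sum F A)) = (\<Union>a\<in>A. set (fst (F a)))"
  by (auto simp: lform_Sum_def list_of_set)

lemma set_lform_comb_mod: "finite A \<Longrightarrow> set (fst (lform_comb_mod q c g A)) \<subseteq> g ` A"
  unfolding lform_comb_mod_def using set_lform_scale by (fastforce simp: set_lform_Sum)

lemma lform_val_comb_mod:
  assumes "q > 0" "finite A"
  shows "lform_val m x (lform_comb_mod q c g A) mod int q
       = (\<Sum>a\<in>A. c a * of_bool (eval_formula m x (g a))) mod int q"
proof -
  define b where "b a = (of_bool (eval_formula m x (g a)) :: int)" for a
  have "lform_val m x (lform_comb_mod q c g A) = (\<Sum>a\<in>A. (c a mod int q) * b a)"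
    unfolding lform_comb_mod_def lform_val_Sum[OF assms(2)] lform_val_scale
    using assms(1) by (simp add: lform_val_def b_def)
  also have "\<dots> mod int q = (\<Sum>a\<in>A. (c a mod int q) * b a mod int q) mod int q"
    by (rule mod_sum_eq[symmetric])
  also have "\<dots> = (\<Sum>a\<in>A. c a * b a mod int q) mod int q"
    by (simp add: mod_mult_left_eq)
  also have "\<dots> = (\<Sum>a\<in>A. c a * b a) mod int q"
    by (rule mod_sum_eq)
  finally show ?thesis by (simp add: b_def)
qed

lemma lform_size_comb_mod:
  assumes "q > 0" "finite A"
  shows "lform_size (lform_comb_mod q c g A) \<le> q * (\<Sum>a\<in>A. formula_size (g a))"
proof -
  have "nat (c a mod int q) * formula_size (g a) \<le> q * formula_size (g a)" for a
  proof -
    have "c a mod int q < int q" using assms(1) by (simp add: pos_mod_bound)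
    then show ?thesis by (intro mult_right_mono) (simp_all add: nat_le_iff)
  qed
  then have "(\<Sum>a\<in>A. nat (c a mod int q) * formula_size (g a)) \<le> (\<Sum>a\<in>A. q * formula_size (g a))"
    by (rule sum_mono)
  then show ?thesis
    unfolding lform_comb_mod_def lform_size_Sum[OF assms(2)] lform_size_scale
    by (simp add: lform_size_def sum_distrib_left)
qed

lemma eval_mod_gate:
  assumes "m > 0" "\<And>v. Pr v = Pr (v mod int m)"
  shows "eval_formula m x (mod_gate m Pr f) = Pr (lform_val m x f)"
proof -
  have Pr_cong: "Pr a = Pr b" if "a mod int m = b mod int m" for a b
    using assms(2) that by metis
  have count: "int (\<Sum>e\<leftarrow>es. if eval_formula m x e then 1 else 0) = (\<Sum>e\<leftarrow>es. of_bool (eval_formula m x e))"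
    for es by (induction es) simp_all
  define S where "S = (\<Sum>e\<leftarrow>fst f. if eval_formula m x e then 1 else 0 :: nat)"
  have "eval_formula m x (mod_gate m Pr f) = Pr (int (S mod m) + int (snd f))"
    using assms(1) by (simp add: mod_gate_def S_def)
  also have "\<dots> = Pr (lform_val m x f)"
  proof (rule Pr_cong)
    have "(int (S mod m) + int (snd f)) mod int m = (int S + int (snd f)) mod int m"
      by (simp add: zmod_int mod_add_left_eq)
    also have "int S + int (snd f) = lform_val m x f"
      unfolding lform_val_def S_def count by simp
    finally show "(int (S mod m) + int (snd f)) mod int m = lform_val m x f mod int m" .
  qed
  finally show ?thesis .
qed

lemma formula_size_mod_gate: "formula_size (mod_gate m Pr f) = Suc (lform_size f)"
  by (simp add: lform_size_def mod_gate_def)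

lemma formula_depth_mod_gate:
  "(\<And>e. e \<in> set (fst f) \<Longrightarrow> formula_depth e \<le> l) \<Longrightarrow> formula_depth (mod_gate m Pr f) \<le> Suc l"
  by (simp add: mod_gate_def foldr_max_le)

lemma formula_vars_mod_gate: "formula_vars (mod_gate m Pr f) = (\<Union>e\<in>set (fst f). formula_vars e)"
  by (simp add: mod_gate_def)

section \<open>The construction\<close>

lemma card_Collect_less_eq_iff: "card {k. k < N \<and> Y k} = N \<longleftrightarrow> (\<forall>k<N. Y k)"
proof
  assume "card {k. k < N \<and> Y k} = N"
  then have "{k. k < N \<and> Y k} = {..<N}" by (intro card_subset_eq) auto
  then show "\<forall>k<N. Y k" by auto
next
  assume "\<forall>k<N. Y k"
  then have "{k. k < N \<and> Y k} = {..<N}" by auto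
  then show "card {k. k < N \<and> Y k} = N" by simp
qed

locale AND_construction =
  fixes m n B :: nat and P :: "nat set" and d :: "nat \<Rightarrow> nat" and c :: "nat \<Rightarrow> nat \<Rightarrow> int"
  assumes m_pos: "0 < m"
    and P_primes: "\<And>p. p \<in> P \<Longrightarrow> prime p \<and> p dvd m"
    and finite_P: "finite P"
    and card_P: "2 \<le> card P"
    and n_pos: "1 \<le> n"
    and B_pos: "1 \<le> B"
    and d_prime_power: "\<And>r. r \<in> P \<Longrightarrow> \<exists>t. d r = r ^ t"
    and B_less_prod_d: "\<And>T. T \<subseteq> P \<Longrightarrow> card P \<le> card T + 1 \<Longrightarrow> B < (\<Prod>r\<in>T. d r)"
    and c_interpolates: "\<And>r N. r \<in> P \<Longrightarrow> N < d r \<Longrightarrow>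
       (if N mod d r = B mod d r then 0 else 1) = (\<Sum>j<d r. c r j * int (N choose j))"
begin

lemma P_prime: "r \<in> P \<Longrightarrow> prime r"
  using P_primes by blast

lemma P_dvd: "r \<in> P \<Longrightarrow> r dvd m"
  using P_primes by blast

lemma finite_subset_P: "T \<subseteq> P \<Longrightarrow> finite T"
  using finite_P finite_subset by blast

lemma P_le_m: "r \<in> P \<Longrightarrow> r \<le> m"
  using P_dvd m_pos dvd_imp_le by blast

definition others :: "nat \<Rightarrow> nat set" where
  "others q = P - {q}"

lemma others_subset: "others q \<subseteq> P"
  by (auto simp: others_def)

text \<open>The weight of r is divisible by every other prime of T and coprime to r, so in
  \<open>\<Sum>\<^sub>r crt_weight T r * X\<^sub>r\<close> only the r-th summand matters modulo r.\<close>

definition crt_weight :: "nat set \<Rightarrow> nat \<Rightarrow> nat" where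
  "crt_weight T r = \<Prod>(T - {r})"

lemma coprime_crt_weight: "T \<subseteq> P \<Longrightarrow> r \<in> T \<Longrightarrow> coprime (int (crt_weight T r)) (int r)"
  unfolding crt_weight_def coprime_int_iff
  by (intro prod_coprime_left) (use P_prime primes_coprime in blast)

lemma dvd_crt_weight:
  assumes "T \<subseteq> P" "r \<in> T" "r' \<in> T" "r' \<noteq> r"
  shows "int r dvd int (crt_weight T r')"
proof -
  have "r dvd \<Prod>(T - {r'})"
    using assms finite_subset_P by (intro dvd_prodI) auto
  then show ?thesis unfolding crt_weight_def int_dvd_int_iff .
qed

lemma crt_combination_mod_iff:
  assumes "T \<subseteq> P"
  shows "(\<forall>r\<in>T. (\<Sum>r'\<in>T. int (crt_weight T r') * X r') mod int r = int (crt_weight T r) * b r mod int r)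
     \<longleftrightarrow> (\<forall>r\<in>T. X r mod int r = b r mod int r)"
proof -
  have "(\<Sum>r'\<in>T. int (crt_weight T r') * X r') mod int r = int (crt_weight T r) * X r mod int r"
    if r: "r \<in> T" for r
  proof -
    have "int r dvd (\<Sum>r'\<in>T - {r}. int (crt_weight T r') * X r')"
      using dvd_crt_weight[OF assms r] by (intro dvd_sum) auto
    then obtain k where "(\<Sum>r'\<in>T - {r}. int (crt_weight T r') * X r') = int r * k" ..
    then show ?thesis
      using finite_subset_P[OF assms] r by (simp add: sum.remove)
  qed
  moreover have "(int (crt_weight T r) * a mod int r = int (crt_weight T r) * b mod int r)
      \<longleftrightarrow> (a mod int r = b mod int r)" if "r \<in> T" for r a b
    using cong_mult_lcancel[OF coprime_crt_weight[OF assms that]] unfolding cong_def .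
  ultimately show ?thesis by simp
qed

text \<open>\<open>\<sigma> \<in> patterns T K\<close> chooses, for every prime r of T, coefficients
  \<open>a\<^sub>r \<in> \<int>\<^sub>r\<^sup>K\<close> and a target residue \<open>b\<^sub>r \<in> {0, 1}\<close>.\<close>

definition patterns :: "nat set \<Rightarrow> nat set \<Rightarrow> (nat \<Rightarrow> (nat \<Rightarrow> nat) \<times> nat) set" where
  "patterns T K = PiE T (\<lambda>r. (K \<rightarrow>\<^sub>E {..<r}) \<times> {0, 1})"

definition pattern_sign :: "nat set \<Rightarrow> (nat \<Rightarrow> (nat \<Rightarrow> nat) \<times> nat) \<Rightarrow> int" where
  "pattern_sign T \<sigma> = (\<Prod>r\<in>T. if snd (\<sigma> r) = 0 then 1 else -1)"

definition pattern_form ::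
    "(nat \<Rightarrow> nat \<Rightarrow> lform) \<Rightarrow> nat \<Rightarrow> nat set \<Rightarrow> nat set \<Rightarrow> (nat \<Rightarrow> (nat \<Rightarrow> nat) \<times> nat) \<Rightarrow> lform" where
  "pattern_form F i T K \<sigma> =
     lform_Sum (\<lambda>(r, k). lform_scale (crt_weight T r * fst (\<sigma> r) k) (F (i * B + k) r)) (T \<times> K)"

definition pattern_test :: "nat set \<Rightarrow> (nat \<Rightarrow> (nat \<Rightarrow> nat) \<times> nat) \<Rightarrow> int \<Rightarrow> bool" where
  "pattern_test T \<sigma> v \<longleftrightarrow> (\<forall>r\<in>T. v mod int r = int (crt_weight T r * snd (\<sigma> r)) mod int r)"

definition pattern_gate ::
    "(nat \<Rightarrow> nat \<Rightarrow> lform) \<Rightarrow> nat \<Rightarrow> nat set \<Rightarrow> nat set \<Rightarrow> (nat \<Rightarrow> (nat \<Rightarrow> nat) \<times> nat) \<Rightarrow> formula" where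
  "pattern_gate F i T K \<sigma> = mod_gate m (pattern_test T \<sigma>) (pattern_form F i T K \<sigma>)"

lemma finite_patterns: "T \<subseteq> P \<Longrightarrow> finite K \<Longrightarrow> finite (patterns T K)"
  unfolding patterns_def using finite_subset_P by (intro finite_PiE finite_cartesian_product) auto

lemma lform_val_pattern_form:
  assumes "T \<subseteq> P" "finite K"
  shows "lform_val m x (pattern_form F i T K \<sigma>)
       = (\<Sum>r\<in>T. int (crt_weight T r) * (\<Sum>k\<in>K. int (fst (\<sigma> r) k) * lform_val m x (F (i * B + k) r)))"
proof -
  have "lform_val m x (pattern_form F i T K \<sigma>)
      = (\<Sum>(r, k)\<in>T \<times> K. int (crt_weight T r * fst (\<sigma> r) k) * lform_val m x (F (i * B + k) r))"
    using assms finite_subset_P[OF assms(1)]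
    by (simp add: pattern_form_def lform_val_Sum lform_val_scale case_prod_beta)
  also have "\<dots> = (\<Sum>r\<in>T. \<Sum>k\<in>K. int (crt_weight T r * fst (\<sigma> r) k) * lform_val m x (F (i * B + k) r))"
    by (rule sum.cartesian_product[symmetric])
  finally show ?thesis by (simp add: sum_distrib_left mult.assoc)
qed

lemma eval_pattern_gate:
  assumes "T \<subseteq> P" "finite K"
  shows "eval_formula m x (pattern_gate F i T K \<sigma>) \<longleftrightarrow>
     (\<forall>r\<in>T. (\<Sum>k\<in>K. int (fst (\<sigma> r) k) * lform_val m x (F (i * B + k) r)) mod int r
        = int (snd (\<sigma> r)) mod int r)"
proof -
  have "v mod int m mod int r = v mod int r" if "r \<in> T" for v r
    using P_dvd assms(1) that by (intro mod_mod_cancel) auto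
  then have "pattern_test T \<sigma> v = pattern_test T \<sigma> (v mod int m)" for v
    by (simp add: pattern_test_def)
  then have "eval_formula m x (pattern_gate F i T K \<sigma>)
      = pattern_test T \<sigma> (lform_val m x (pattern_form F i T K \<sigma>))"
    unfolding pattern_gate_def by (intro eval_mod_gate m_pos) blast
  then show ?thesis
    unfolding lform_val_pattern_form[OF assms] pattern_test_def of_nat_mult crt_combination_mod_iff[OF assms(1)] .
qed

text \<open>In the signed sum over all patterns the factors for the different primes separate, and
  each of them is the character sum of \<open>signed_count_linear_congruence\<close>.\<close>

lemma signed_sum_pattern_gates:
  assumes T: "T \<subseteq> P" and K: "finite K"
  shows "(\<Sum>\<sigma>\<in>patterns T K. pattern_sign T \<sigma> * of_bool (eval_formula m x (pattern_gate F i T K \<sigma>)))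
       = (\<Prod>r\<in>T. int r ^ card K) * of_bool (\<forall>r\<in>T. \<forall>k\<in>K. int r dvd lform_val m x (F (i * B + k) r))"
proof -
  define X where "X r a = (\<Sum>k\<in>K. int (a k) * lform_val m x (F (i * B + k) r))" for r a
  define g where "g r z = ((if snd z = 0 then 1 else -1) * of_bool (X r (fst z) mod int r = int (snd z) mod int r) :: int)"
    for r z
  have fT: "finite T" using finite_subset_P[OF T] .
  have "pattern_sign T \<sigma> * of_bool (eval_formula m x (pattern_gate F i T K \<sigma>)) = (\<Prod>r\<in>T. g r (\<sigma> r))"
    for \<sigma>
    unfolding eval_pattern_gate[OF T K] pattern_sign_def g_def X_def
    using fT by (simp add: prod.distrib of_bool_def prod.neutral_const prod_zero_iff del: mod_mod_trivial)
  then have "(\<Sum>\<sigma>\<in>patterns T K. pattern_sign T \<sigma> * of_bool (eval_formula m x (pattern_gate F i T K \<sigma>)))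
      = (\<Prod>r\<in>T. \<Sum>z\<in>(K \<rightarrow>\<^sub>E {..<r}) \<times> {0, 1}. g r z)"
    unfolding patterns_def using fT K by (simp add: prod_sum_PiE finite_PiE)
  also have "\<dots> = (\<Prod>r\<in>T. if \<forall>k\<in>K. int r dvd lform_val m x (F (i * B + k) r) then int r ^ card K else 0)"
  proof (intro prod.cong refl)
    fix r assume "r \<in> T"
    then have r: "prime r" using T P_prime by blast
    have "(\<Sum>z\<in>(K \<rightarrow>\<^sub>E {..<r}) \<times> {0, 1}. g r z) = (\<Sum>(a, b)\<in>(K \<rightarrow>\<^sub>E {..<r}) \<times> {0, 1}.
        (if b = 0 then 1 else -1) * of_bool (X r a mod int r = int b mod int r))"
      by (simp add: g_def split_def)
    also have "\<dots> = (if \<forall>k\<in>K. int r dvd lform_val m x (F (i * B + k) r) then int r ^ card K else 0)"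
      unfolding X_def by (rule signed_count_linear_congruence[OF r K])
    finally show "(\<Sum>z\<in>(K \<rightarrow>\<^sub>E {..<r}) \<times> {0, 1}. g r z) = \<dots>" .
  qed
  also have "\<dots> = (\<Prod>r\<in>T. int r ^ card K) * of_bool (\<forall>r\<in>T. \<forall>k\<in>K. int r dvd lform_val m x (F (i * B + k) r))"
  proof (cases "\<forall>r\<in>T. \<forall>k\<in>K. int r dvd lform_val m x (F (i * B + k) r)")
    case False
    then obtain r0 where "r0 \<in> T" "\<not> (\<forall>k\<in>K. int r0 dvd lform_val m x (F (i * B + k) r0))"
      by blast
    then have "(\<Prod>r\<in>T. if \<forall>k\<in>K. int r dvd lform_val m x (F (i * B + k) r) then int r ^ card K else 0) = 0"
      using fT by (subst prod_zero_iff) auto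
    then show ?thesis using False by simp
  qed simp
  finally show ?thesis .
qed

definition small_sets :: "nat \<Rightarrow> nat set set" where
  "small_sets q = {K. K \<subseteq> {..<B} \<and> card K < d q}"

definition inverse_mod :: "nat \<Rightarrow> nat set \<Rightarrow> int" where
  "inverse_mod q K = (SOME v. [int (\<Prod>r\<in>others q. r ^ card K) * v = 1] (mod int q))"

text \<open>Block i of level l consists of the inputs \<open>i B\<^sup>l, \<dots>, (i + 1) B\<^sup>l - 1\<close>, where inputs beyond
  \<open>n - 1\<close> are replaced by the last one.  Its form for the prime r is divisible by r iff the block
  is all true.\<close>

primrec level_form :: "nat \<Rightarrow> nat \<Rightarrow> nat \<Rightarrow> lform" where
  "level_form 0 i r = ([Input (min i (n - 1))], r - 1)"
| "level_form (Suc l) i q = lform_comb_mod q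
      (\<lambda>(K, \<sigma>). c q (card K) * inverse_mod q K * pattern_sign (others q) \<sigma>)
      (\<lambda>(K, \<sigma>). pattern_gate (level_form l) i (others q) K \<sigma>)
      (SIGMA K:small_sets q. patterns (others q) K)"

definition and_formula :: "nat \<Rightarrow> formula" where
  "and_formula L = mod_gate m (\<lambda>v. \<forall>r\<in>P. v mod int r = 0)
     (lform_Sum (\<lambda>r. lform_scale (crt_weight P r) (level_form L 0 r)) P)"

definition block_and :: "(nat \<Rightarrow> bool) \<Rightarrow> nat \<Rightarrow> nat \<Rightarrow> bool" where
  "block_and x l i \<longleftrightarrow> (\<forall>u < B ^ l. x (min (i * B ^ l + u) (n - 1)))"

lemma finite_small_sets: "finite (small_sets q)"
  unfolding small_sets_def by (rule finite_subset[of _ "Pow {..<B}"]) auto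

lemma finite_small_set: "K \<in> small_sets q \<Longrightarrow> finite K"
  unfolding small_sets_def using finite_subset by blast

lemma inverse_mod:
  assumes "q \<in> P"
  shows "[int (\<Prod>r\<in>others q. r ^ card K) * inverse_mod q K = 1] (mod int q)"
proof -
  have "coprime (\<Prod>r\<in>others q. r ^ card K) q"
  proof (rule prod_coprime_left)
    fix r assume "r \<in> others q"
    then have "coprime r q"
      by (intro primes_coprime) (use assms P_prime in \<open>auto simp: others_def\<close>)
    then show "coprime (r ^ card K) q" by simp
  qed
  then have "coprime (int (\<Prod>r\<in>others q. r ^ card K)) (int q)"
    by (simp only: coprime_int_iff)
  then have "\<exists>v. [int (\<Prod>r\<in>others q. r ^ card K) * v = 1] (mod int q)"
    by (rule cong_solve_coprime_int)
  then show ?thesis unfolding inverse_mod_def by (rule someI_ex)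
qed

lemma signed_sum_pattern_gates_mod:
  assumes q: "q \<in> P" and K: "finite K"
  shows "inverse_mod q K * (\<Sum>\<sigma>\<in>patterns (others q) K.
           pattern_sign (others q) \<sigma> * of_bool (eval_formula m x (pattern_gate F i (others q) K \<sigma>))) mod int q
       = of_bool (\<forall>r\<in>others q. \<forall>k\<in>K. int r dvd lform_val m x (F (i * B + k) r)) mod int q"
proof -
  define A where "A = (of_bool (\<forall>r\<in>others q. \<forall>k\<in>K. int r dvd lform_val m x (F (i * B + k) r)) :: int)"
  have "[(\<Prod>r\<in>others q. int r ^ card K) * inverse_mod q K = 1] (mod int q)"
    using inverse_mod[OF q, of K] by simp
  from cong_mult[OF this cong_refl[of A]]
  have "[inverse_mod q K * ((\<Prod>r\<in>others q. int r ^ card K) * A) = A] (mod int q)"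
    by (simp add: ac_simps)
  then show ?thesis
    unfolding signed_sum_pattern_gates[OF others_subset K] A_def cong_def by simp
qed

lemma level_form_Suc_mod:
  assumes q: "q \<in> P"
  shows "lform_val m x (level_form (Suc l) i q) mod int q =
    (\<Sum>K\<in>small_sets q. c q (card K) *
       of_bool (\<forall>r\<in>others q. \<forall>k\<in>K. int r dvd lform_val m x (level_form l (i * B + k) r))) mod int q"
proof -
  define E where "E K \<sigma> = (of_bool (eval_formula m x (pattern_gate (level_form l) i (others q) K \<sigma>)) :: int)"
    for K \<sigma>
  have q0: "0 < q" using prime_gt_0_nat[OF P_prime[OF q]] .
  have fin_patterns: "finite (patterns (others q) K)" if "K \<in> small_sets q" for K
    using finite_patterns[OF others_subset finite_small_set[OF that]] .
  have fin: "finite (SIGMA K:small_sets q. patterns (others q) K)"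
    using finite_small_sets fin_patterns by blast
  have "lform_val m x (level_form (Suc l) i q) mod int q =
      (\<Sum>(K, \<sigma>)\<in>(SIGMA K:small_sets q. patterns (others q) K).
         c q (card K) * inverse_mod q K * pattern_sign (others q) \<sigma> * E K \<sigma>) mod int q"
    unfolding level_form.simps lform_val_comb_mod[OF q0 fin] by (simp add: case_prod_beta E_def)
  also have "\<dots> = (\<Sum>K\<in>small_sets q. \<Sum>\<sigma>\<in>patterns (others q) K.
         c q (card K) * inverse_mod q K * pattern_sign (others q) \<sigma> * E K \<sigma>) mod int q"
    by (subst sum.Sigma) (use finite_small_sets fin_patterns in auto)
  also have "\<dots> = (\<Sum>K\<in>small_sets q. c q (card K) *
      (inverse_mod q K * (\<Sum>\<sigma>\<in>patterns (others q) K. pattern_sign (others q) \<sigma> * E K \<sigma>))) mod int q"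
    by (simp add: sum_distrib_left mult.assoc)
  also have "\<dots> = (\<Sum>K\<in>small_sets q. c q (card K) *
      of_bool (\<forall>r\<in>others q. \<forall>k\<in>K. int r dvd lform_val m x (level_form l (i * B + k) r))) mod int q"
  proof (rule sum_mod_cong)
    fix K assume "K \<in> small_sets q"
    then have h: "inverse_mod q K * (\<Sum>\<sigma>\<in>patterns (others q) K. pattern_sign (others q) \<sigma> * E K \<sigma>) mod int q
        = of_bool (\<forall>r\<in>others q. \<forall>k\<in>K. int r dvd lform_val m x (level_form l (i * B + k) r)) mod int q"
      unfolding E_def by (rule signed_sum_pattern_gates_mod[OF q finite_small_set])
    show "c q (card K) * (inverse_mod q K * (\<Sum>\<sigma>\<in>patterns (others q) K. pattern_sign (others q) \<sigma> * E K \<sigma>))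
        mod int q = c q (card K) *
        of_bool (\<forall>r\<in>others q. \<forall>k\<in>K. int r dvd lform_val m x (level_form l (i * B + k) r)) mod int q"
      using arg_cong[OF h, of "\<lambda>v. c q (card K) * v mod int q"] by (simp add: mod_mult_right_eq)
  qed
  finally show ?thesis .
qed

lemma sum_small_sets:
  assumes q: "q \<in> P"
  shows "(\<Sum>K\<in>small_sets q. c q (card K) * of_bool (\<forall>k\<in>K. Y k))
       = (\<Sum>j<d q. c q j * int (card {k. k < B \<and> Y k} choose j))"
proof -
  define subsets where "subsets j = {K. K \<subseteq> {..<B} \<and> card K = j}" for j
  have small_sets: "small_sets q = (\<Union>j<d q. subsets j)"
    unfolding small_sets_def subsets_def by auto
  have "finite (subsets j)" for j
    unfolding subsets_def by (rule finite_subset[of _ "Pow {..<B}"]) auto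
  then have "(\<Sum>K\<in>small_sets q. c q (card K) * of_bool (\<forall>k\<in>K. Y k))
      = (\<Sum>j<d q. \<Sum>K\<in>subsets j. c q (card K) * of_bool (\<forall>k\<in>K. Y k))"
    unfolding small_sets by (intro sum.UNION_disjoint) (auto simp: subsets_def)
  also have "\<dots> = (\<Sum>j<d q. \<Sum>K\<in>subsets j. c q j * of_bool (\<forall>k\<in>K. Y k))"
    by (intro sum.cong refl) (simp add: subsets_def)
  also have "\<dots> = (\<Sum>j<d q. c q j * (\<Sum>K\<in>subsets j. of_bool (\<forall>k\<in>K. Y k)))"
    by (simp add: sum_distrib_left)
  finally show ?thesis unfolding subsets_def sum_subsets_all .
qed

text \<open>Binomial coefficients \<open>N choose j\<close> with \<open>j < d q\<close> are \<open>d q\<close>-periodic modulo q, so the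
  interpolation \<open>c_interpolates\<close> on \<open>{0..<d q}\<close> holds modulo q for all N.\<close>

lemma sum_small_sets_mod:
  assumes q: "q \<in> P"
  shows "(\<Sum>K\<in>small_sets q. c q (card K) * of_bool (\<forall>k\<in>K. Y k)) mod int q
       = (if card {k. k < B \<and> Y k} mod d q = B mod d q then 0 else 1) mod int q"
proof -
  define N where "N = card {k. k < B \<and> Y k}"
  obtain t where t: "d q = q ^ t" using d_prime_power[OF q] by blast
  have "prime q" using P_prime[OF q] .
  then have dq: "d q > 0" using t prime_gt_0_nat by simp
  have "(\<Sum>j<d q. c q j * int (N choose j)) mod int q
      = (\<Sum>j<d q. c q j * int ((N mod d q) choose j)) mod int q"
  proof (rule sum_mod_cong)
    fix j assume "j \<in> {..<d q}"
    then have "int (N choose j) mod int q = int ((N mod d q) choose j) mod int q"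
      using choose_mod_prime_periodic[OF \<open>prime q\<close>, of j t N] t by (simp flip: of_nat_mod)
    then show "c q j * int (N choose j) mod int q = c q j * int ((N mod d q) choose j) mod int q"
      by (metis mod_mult_right_eq)
  qed
  also have "(\<Sum>j<d q. c q j * int ((N mod d q) choose j)) = (if N mod d q = B mod d q then 0 else 1)"
    using c_interpolates[OF q, of "N mod d q"] dq by simp
  finally show ?thesis unfolding sum_small_sets[OF q] N_def .
qed

lemma block_and_0: "block_and x 0 i \<longleftrightarrow> x (min i (n - 1))"
  by (simp add: block_and_def)

lemma block_and_Suc: "block_and x (Suc l) i \<longleftrightarrow> (\<forall>k<B. block_and x l (i * B + k))"
proof
  assume all: "block_and x (Suc l) i"
  show "\<forall>k<B. block_and x l (i * B + k)"
    unfolding block_and_def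
  proof (intro allI impI)
    fix k u assume "k < B" "u < B ^ l"
    then have "k * B ^ l + u < Suc k * B ^ l" by simp
    also have "\<dots> \<le> B ^ Suc l" using \<open>k < B\<close> mult_le_mono1[of "Suc k" B "B ^ l"] by simp
    finally have "k * B ^ l + u < B ^ Suc l" .
    then have "x (min (i * B ^ Suc l + (k * B ^ l + u)) (n - 1))"
      using all unfolding block_and_def by blast
    moreover have "(i * B + k) * B ^ l + u = i * B ^ Suc l + (k * B ^ l + u)"
      by (simp add: algebra_simps)
    ultimately show "x (min ((i * B + k) * B ^ l + u) (n - 1))" by (simp only:)
  qed
next
  assume all: "\<forall>k<B. block_and x l (i * B + k)"
  show "block_and x (Suc l) i"
    unfolding block_and_def
  proof (intro allI impI)
    fix u assume u: "u < B ^ Suc l"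
    have "B ^ l > 0" using B_pos by simp
    then have "u div B ^ l < B" "u mod B ^ l < B ^ l"
      using u by (simp_all add: div_less_iff_less_mult mult.commute)
    then have "x (min ((i * B + u div B ^ l) * B ^ l + u mod B ^ l) (n - 1))"
      using all unfolding block_and_def by blast
    moreover have "(i * B + u div B ^ l) * B ^ l + u mod B ^ l = i * B ^ Suc l + u"
      by (simp add: algebra_simps)
    ultimately show "x (min (i * B ^ Suc l + u) (n - 1))" by simp
  qed
qed

lemma block_and_iff_all:
  assumes "n \<le> B ^ L"
  shows "block_and x L 0 \<longleftrightarrow> (\<forall>j<n. x j)"
proof
  assume all: "block_and x L 0"
  show "\<forall>j<n. x j"
  proof (intro allI impI)
    fix j assume "j < n"
    then have "j < B ^ L" "min j (n - 1) = j" using assms by auto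
    then show "x j" using all unfolding block_and_def by (metis mult_0 add_0)
  qed
next
  assume "\<forall>j<n. x j"
  then show "block_and x L 0" unfolding block_and_def using n_pos by (simp add: min_def)
qed

lemma prod_d_dvd: "T \<subseteq> P \<Longrightarrow> (\<forall>r\<in>T. d r dvd z) \<Longrightarrow> (\<Prod>r\<in>T. d r) dvd z"
proof (intro prod_dvd_of_pairwise_coprime)
  fix r r' assume "T \<subseteq> P" "r \<in> T" "r' \<in> T" "r \<noteq> r'"
  then have "r \<in> P" "r' \<in> P" "r \<noteq> r'" by auto
  then have "coprime r r'" using P_prime by (intro primes_coprime) auto
  moreover obtain t t' where "d r = r ^ t" "d r' = r' ^ t'"
    using d_prime_power \<open>r \<in> P\<close> \<open>r' \<in> P\<close> by blast
  ultimately show "coprime (d r) (d r')" by simp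
qed (use finite_subset_P in auto)

lemma count_eq_B_iff:
  assumes "N \<le> B" "T \<subseteq> P" "card P \<le> card T + 1"
  shows "(\<forall>r\<in>T. N mod d r = B mod d r) \<longleftrightarrow> N = B"
proof
  assume "\<forall>r\<in>T. N mod d r = B mod d r"
  then have "\<forall>r\<in>T. d r dvd B - N" using assms(1) by (metis mod_eq_dvd_iff_nat)
  then have "(\<Prod>r\<in>T. d r) dvd B - N" using prod_d_dvd assms(2) by blast
  moreover have "B - N < (\<Prod>r\<in>T. d r)" using B_less_prod_d[OF assms(2,3)] by simp
  ultimately have "B - N = 0" by (metis gr0I nat_dvd_not_less)
  then show "N = B" using assms(1) by simp
qed simp

lemma level_form_Suc_dvd_iff:
  assumes q: "q \<in> P"
    and IH: "\<And>j. block_and x l j \<longleftrightarrow> (\<forall>r\<in>others q. int r dvd lform_val m x (level_form l j r))"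
  shows "int q dvd lform_val m x (level_form (Suc l) i q)
     \<longleftrightarrow> card {k. k < B \<and> block_and x l (i * B + k)} mod d q = B mod d q"
proof -
  have "(\<forall>r\<in>others q. \<forall>k\<in>K. int r dvd lform_val m x (level_form l (i * B + k) r))
      \<longleftrightarrow> (\<forall>k\<in>K. block_and x l (i * B + k))" for K
    unfolding IH by blast
  then have "lform_val m x (level_form (Suc l) i q) mod int q
      = (\<Sum>K\<in>small_sets q. c q (card K) * of_bool (\<forall>k\<in>K. block_and x l (i * B + k))) mod int q"
    unfolding level_form_Suc_mod[OF q] by (simp only:)
  also have "\<dots> = (if card {k. k < B \<and> block_and x l (i * B + k)} mod d q = B mod d q then 0 else 1) mod int q"
    by (rule sum_small_sets_mod[OF q])
  finally have val: "lform_val m x (level_form (Suc l) i q) mod int q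
      = (if card {k. k < B \<and> block_and x l (i * B + k)} mod d q = B mod d q then 0 else 1) mod int q" .
  have "(1::int) mod int q = 1" using prime_ge_2_nat[OF P_prime[OF q]] by simp
  then show ?thesis unfolding dvd_eq_mod_eq_0 val by simp
qed

lemma level_form_dvd_iff:
  assumes "T \<subseteq> P" "card P \<le> card T + 1"
  shows "block_and x l i \<longleftrightarrow> (\<forall>r\<in>T. int r dvd lform_val m x (level_form l i r))"
  using assms
proof (induction l arbitrary: i T)
  case 0
  have "int r dvd lform_val m x (level_form 0 i r) \<longleftrightarrow> x (min i (n - 1))" if "r \<in> P" for r
  proof -
    have "r \<ge> 2" using prime_ge_2_nat[OF P_prime[OF that]] .
    moreover have "lform_val m x (level_form 0 i r) = int (r - 1) + of_bool (x (min i (n - 1)))"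
      by (simp add: lform_val_def)
    ultimately show ?thesis by (auto simp: of_nat_diff zdvd_not_zless)
  qed
  moreover have "T \<noteq> {}" using 0 card_P by auto
  ultimately show ?case using 0 unfolding block_and_0 by blast
next
  case (Suc l)
  define N where "N = card {k. k < B \<and> block_and x l (i * B + k)}"
  have "N \<le> card {..<B}" unfolding N_def by (intro card_mono) auto
  then have "N \<le> B" by simp
  have "block_and x (Suc l) i \<longleftrightarrow> N = B"
    unfolding block_and_Suc N_def card_Collect_less_eq_iff ..
  also have "\<dots> \<longleftrightarrow> (\<forall>r\<in>T. N mod d r = B mod d r)"
    using count_eq_B_iff[OF \<open>N \<le> B\<close> Suc.prems] by simp
  also have "\<dots> \<longleftrightarrow> (\<forall>r\<in>T. int r dvd lform_val m x (level_form (Suc l) i r))"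
  proof (intro ball_cong refl)
    fix q assume "q \<in> T"
    then have q: "q \<in> P" using Suc.prems(1) by blast
    then have "card P \<le> card (others q) + 1"
      using finite_P by (simp add: others_def card_Diff_singleton)
    from level_form_Suc_dvd_iff[OF q Suc.IH[OF others_subset this]]
    show "N mod d q = B mod d q \<longleftrightarrow> int q dvd lform_val m x (level_form (Suc l) i q)"
      unfolding N_def by simp
  qed
  finally show ?case .
qed

lemma eval_and_formula: "eval_formula m x (and_formula L) \<longleftrightarrow> block_and x L 0"
proof -
  define F where "F r = lform_val m x (level_form L 0 r)" for r
  have "v mod int m mod int r = v mod int r" if "r \<in> P" for v r
    using P_dvd[OF that] by (intro mod_mod_cancel) auto
  then have "eval_formula m x (and_formula L)
      \<longleftrightarrow> (\<forall>r\<in>P. lform_val m x (lform_Sum (\<lambda>r. lform_scale (crt_weight P r) (level_form L 0 r)) P) mod int r = 0)"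
    unfolding and_formula_def by (intro eval_mod_gate m_pos) simp
  also have "\<dots> \<longleftrightarrow> (\<forall>r\<in>P. (\<Sum>r'\<in>P. int (crt_weight P r') * F r') mod int r = int (crt_weight P r) * 0 mod int r)"
    by (simp add: lform_val_Sum finite_P lform_val_scale F_def)
  also have "\<dots> \<longleftrightarrow> (\<forall>r\<in>P. int r dvd F r)"
    unfolding crt_combination_mod_iff[OF subset_refl] by (simp add: dvd_eq_mod_eq_0)
  also have "\<dots> \<longleftrightarrow> block_and x L 0"
    unfolding F_def using level_form_dvd_iff[of P] by simp
  finally show ?thesis .
qed

lemma depth_vars_level_form:
  "e \<in> set (fst (level_form l i r)) \<Longrightarrow> formula_depth e \<le> l \<and> formula_vars e \<subseteq> {..<n}"
proof (induction l arbitrary: i r e)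
  case 0
  then show ?case using n_pos by auto
next
  case (Suc l)
  have "finite (SIGMA K:small_sets r. patterns (others r) K)"
    using finite_small_sets finite_patterns[OF others_subset] finite_small_set by blast
  then have "e \<in> (\<lambda>(K, \<sigma>). pattern_gate (level_form l) i (others r) K \<sigma>) ` (SIGMA K:small_sets r. patterns (others r) K)"
    using Suc.prems set_lform_comb_mod unfolding level_form.simps by blast
  then obtain K \<sigma> where K: "K \<in> small_sets r" and e: "e = pattern_gate (level_form l) i (others r) K \<sigma>"
    by auto
  have fin: "finite (others r \<times> K)"
    using finite_subset_P[OF others_subset] finite_small_set[OF K] by blast
  have "formula_depth e' \<le> l \<and> formula_vars e' \<subseteq> {..<n}"
    if "e' \<in> set (fst (pattern_form (level_form l) i (others r) K \<sigma>))" for e'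
  proof -
    have "e' \<in> (\<Union>(r', k)\<in>others r \<times> K. set (fst (level_form l (i * B + k) r')))"
      using that unfolding pattern_form_def set_lform_Sum[OF fin]
      by (auto dest!: set_lform_scale[THEN subsetD])
    then show ?thesis using Suc.IH by blast
  qed
  then show ?case
    unfolding e pattern_gate_def by (auto intro: formula_depth_mod_gate simp: formula_vars_mod_gate)
qed

lemma and_formula_wf:
  "is_gate (and_formula L) \<and> formula_depth (and_formula L) \<le> Suc L \<and> formula_vars (and_formula L) \<subseteq> {..<n}"
proof -
  define f where "f = lform_Sum (\<lambda>r. lform_scale (crt_weight P r) (level_form L 0 r)) P"
  have args: "formula_depth e \<le> L \<and> formula_vars e \<subseteq> {..<n}" if "e \<in> set (fst f)" for e
  proof -
    have "e \<in> (\<Union>r\<in>P. set (fst (level_form L 0 r)))"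
      using that set_lform_scale unfolding f_def set_lform_Sum[OF finite_P] by blast
    then show ?thesis using depth_vars_level_form by blast
  qed
  have "formula_depth (and_formula L) \<le> Suc L"
    unfolding and_formula_def f_def[symmetric] using args by (intro formula_depth_mod_gate) blast
  moreover have "formula_vars (and_formula L) \<subseteq> {..<n}"
    unfolding and_formula_def f_def[symmetric] formula_vars_mod_gate using args by blast
  ultimately show ?thesis by (simp add: and_formula_def mod_gate_def)
qed

subsection \<open>Size\<close>

lemma crt_weight_le_m: "T \<subseteq> P \<Longrightarrow> crt_weight T r \<le> m"
proof -
  assume T: "T \<subseteq> P"
  have "crt_weight T r dvd \<Prod>P"
    unfolding crt_weight_def using T finite_P by (intro prod_dvd_prod_subset) auto
  also have "\<Prod>P dvd m"
    using finite_P P_dvd by (intro prod_dvd_of_pairwise_coprime[where f=id, simplified])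
      (auto intro!: primes_coprime P_prime)
  finally show ?thesis using m_pos by (simp add: dvd_imp_le)
qed

definition d_max :: nat where
  "d_max = Max (d ` P)"

definition growth :: nat where
  "growth = m * (d_max * B ^ d_max) * (2 * m ^ d_max) ^ card P * (card P * d_max * m * m)"

lemma d_le_d_max: "r \<in> P \<Longrightarrow> d r \<le> d_max"
  unfolding d_max_def using finite_P by simp

lemma d_pos: "r \<in> P \<Longrightarrow> 0 < d r"
  using d_prime_power P_prime prime_gt_0_nat by (metis zero_less_power)

lemma d_max_pos: "1 \<le> d_max"
proof -
  obtain r where "r \<in> P" using card_P by fastforce
  then show ?thesis using d_le_d_max d_pos by fastforce
qed

lemma growth_pos: "1 \<le> growth"
  unfolding growth_def using m_pos d_max_pos B_pos card_P by (simp add: Suc_le_eq)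

lemma lform_size_pattern_form:
  assumes T: "T \<subseteq> P" and K: "finite K" and \<sigma>: "\<sigma> \<in> patterns T K"
    and Z: "\<And>r k. r \<in> T \<Longrightarrow> k \<in> K \<Longrightarrow> lform_size (F (i * B + k) r) \<le> Z"
  shows "lform_size (pattern_form F i T K \<sigma>) \<le> card T * card K * (m * m * Z)"
proof -
  have fin: "finite (T \<times> K)" using finite_subset_P[OF T] K by simp
  have "lform_size (pattern_form F i T K \<sigma>)
      = (\<Sum>(r, k)\<in>T \<times> K. crt_weight T r * fst (\<sigma> r) k * lform_size (F (i * B + k) r))"
    unfolding pattern_form_def lform_size_Sum[OF fin] by (simp add: lform_size_scale case_prod_beta)
  also have "\<dots> \<le> (\<Sum>(r, k)\<in>T \<times> K. m * m * Z)"
  proof (intro sum_mono, clarify)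
    fix r k assume r: "r \<in> T" and k: "k \<in> K"
    have "fst (\<sigma> r) k < r" using \<sigma> r k unfolding patterns_def by (auto simp: PiE_def Pi_def)
    then have "fst (\<sigma> r) k \<le> m" using P_le_m[of r] r T by auto
    then show "crt_weight T r * fst (\<sigma> r) k * lform_size (F (i * B + k) r) \<le> m * m * Z"
      using crt_weight_le_m[OF T] Z[OF r k] by (intro mult_le_mono) auto
  qed
  also have "\<dots> = card T * card K * (m * m * Z)" by (simp add: card_cartesian_product)
  finally show ?thesis .
qed

lemma card_patterns:
  assumes T: "T \<subseteq> P" and K: "finite K" "card K \<le> d_max"
  shows "card (patterns T K) \<le> (2 * m ^ d_max) ^ card P"
proof -
  have "card (patterns T K) = (\<Prod>r\<in>T. r ^ card K * 2)"
    unfolding patterns_def using finite_subset_P[OF T] K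
    by (simp add: card_PiE card_cartesian_product mult_2_right)
  also have "\<dots> \<le> (2 * m ^ d_max) ^ card P"
  proof (rule prod_le_power)
    fix r assume r: "r \<in> T"
    have "r ^ card K \<le> m ^ card K" using P_le_m r T by (intro power_mono) auto
    also have "\<dots> \<le> m ^ d_max" using K m_pos by (intro power_increasing) auto
    finally show "0 \<le> r ^ card K * 2 \<and> r ^ card K * 2 \<le> 2 * m ^ d_max" by simp
  qed (use T finite_P m_pos in \<open>simp_all add: card_mono\<close>)
  finally show ?thesis .
qed

lemma card_small_sets: "q \<in> P \<Longrightarrow> card (small_sets q) \<le> d_max * B ^ d_max"
proof -
  assume q: "q \<in> P"
  define subsets where "subsets j = {K. K \<subseteq> {..<B} \<and> card K = j}" for j
  have "small_sets q = (\<Union>j<d q. subsets j)" unfolding small_sets_def subsets_def by auto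
  then have "card (small_sets q) \<le> (\<Sum>j<d q. card (subsets j))"
    using card_UN_le[of "{..<d q}" subsets] by simp
  also have "\<dots> \<le> (\<Sum>j<d q. B ^ d_max)"
  proof (intro sum_mono)
    fix j assume j: "j \<in> {..<d q}"
    have "card (subsets j) = B choose j" unfolding subsets_def using n_subsets[of "{..<B}" j] by simp
    also have "\<dots> \<le> B ^ j" by (cases "j \<le> B") (auto simp: binomial_le_pow binomial_eq_0)
    also have "\<dots> \<le> B ^ d_max" using j d_le_d_max[OF q] B_pos by (intro power_increasing) auto
    finally show "card (subsets j) \<le> B ^ d_max" .
  qed
  also have "\<dots> \<le> d_max * B ^ d_max" using d_le_d_max[OF q] by simp
  finally show ?thesis .
qed

lemma formula_size_pattern_gate:
  assumes q: "q \<in> P" and K: "K \<in> small_sets q" and \<sigma>: "\<sigma> \<in> patterns (others q) K"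
    and Z: "\<And>j r. r \<in> P \<Longrightarrow> lform_size (F j r) \<le> Z"
  shows "formula_size (pattern_gate F i (others q) K \<sigma>) \<le> card P * d_max * m * m * (1 + Z)"
proof -
  have "card (others q) \<le> card P" "card K \<le> d_max"
    using finite_P others_subset K d_le_d_max[OF q] by (auto simp: card_mono small_sets_def)
  then have "card (others q) * card K * (m * m * Z) \<le> card P * d_max * m * m * Z"
    by (simp add: mult_le_mono)
  moreover have "lform_size (pattern_form F i (others q) K \<sigma>) \<le> card (others q) * card K * (m * m * Z)"
    using Z others_subset by (intro lform_size_pattern_form[OF others_subset finite_small_set[OF K] \<sigma>]) blast
  ultimately have "lform_size (pattern_form F i (others q) K \<sigma>) \<le> card P * d_max * m * m * Z"
    by linarith
  moreover have "1 \<le> card P * d_max * m * m" using card_P d_max_pos m_pos by simp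
  ultimately have "Suc (lform_size (pattern_form F i (others q) K \<sigma>))
      \<le> card P * d_max * m * m + card P * d_max * m * m * Z"
    by linarith
  then show ?thesis
    by (simp add: pattern_gate_def formula_size_mod_gate distrib_left)
qed

lemma lform_size_level_form_Suc:
  assumes q: "q \<in> P" and Z: "\<And>j r. r \<in> P \<Longrightarrow> lform_size (level_form l j r) \<le> Z"
  shows "lform_size (level_form (Suc l) i q) \<le> growth * (1 + Z)"
proof -
  define Y where "Y = card P * d_max * m * m * (1 + Z)"
  have q0: "0 < q" using prime_gt_0_nat[OF P_prime[OF q]] .
  have fin_patterns: "finite (patterns (others q) K)" if "K \<in> small_sets q" for K
    using finite_patterns[OF others_subset finite_small_set[OF that]] .
  have "finite (SIGMA K:small_sets q. patterns (others q) K)"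
    using finite_small_sets fin_patterns by blast
  then have "lform_size (level_form (Suc l) i q)
      \<le> q * (\<Sum>(K, \<sigma>)\<in>(SIGMA K:small_sets q. patterns (others q) K).
             formula_size (pattern_gate (level_form l) i (others q) K \<sigma>))"
    unfolding level_form.simps using lform_size_comb_mod[OF q0] by (simp add: split_def)
  also have "(\<Sum>(K, \<sigma>)\<in>(SIGMA K:small_sets q. patterns (others q) K).
             formula_size (pattern_gate (level_form l) i (others q) K \<sigma>))
      = (\<Sum>K\<in>small_sets q. \<Sum>\<sigma>\<in>patterns (others q) K.
             formula_size (pattern_gate (level_form l) i (others q) K \<sigma>))"
    by (subst sum.Sigma) (use finite_small_sets fin_patterns in auto)
  also have "\<dots> \<le> (\<Sum>K\<in>small_sets q. \<Sum>\<sigma>\<in>patterns (others q) K. Y)"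
    unfolding Y_def using formula_size_pattern_gate[OF q _ _ Z] by (intro sum_mono) auto
  also have "\<dots> \<le> (\<Sum>K\<in>small_sets q. (2 * m ^ d_max) ^ card P * Y)"
  proof (intro sum_mono)
    fix K assume K: "K \<in> small_sets q"
    then have "card K \<le> d_max" using d_le_d_max[OF q] by (simp add: small_sets_def)
    then show "(\<Sum>\<sigma>\<in>patterns (others q) K. Y) \<le> (2 * m ^ d_max) ^ card P * Y"
      using card_patterns[OF others_subset finite_small_set[OF K]] by simp
  qed
  also have "\<dots> \<le> (d_max * B ^ d_max) * ((2 * m ^ d_max) ^ card P * Y)"
    using card_small_sets[OF q] by simp
  finally have "lform_size (level_form (Suc l) i q) \<le> q * ((d_max * B ^ d_max) * ((2 * m ^ d_max) ^ card P * Y))"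
    by (simp add: mult_le_mono)
  also have "\<dots> \<le> m * ((d_max * B ^ d_max) * ((2 * m ^ d_max) ^ card P * Y))"
    using P_le_m[OF q] by simp
  also have "\<dots> = growth * (1 + Z)"
    unfolding growth_def Y_def by (simp only: ac_simps)
  finally show ?thesis .
qed

lemma lform_size_level_form: "q \<in> P \<Longrightarrow> lform_size (level_form l i q) < (2 * growth) ^ l"
proof (induction l arbitrary: i q)
  case 0
  then show ?case by (simp add: lform_size_def)
next
  case (Suc l)
  have "0 < (2 * growth) ^ l" using growth_pos by simp
  then obtain Z where Z: "(2 * growth) ^ l = Suc Z" using gr0_implies_Suc by blast
  have "lform_size (level_form (Suc l) i q) \<le> growth * (1 + Z)"
    using Suc.IH unfolding Z by (intro lform_size_level_form_Suc[OF Suc.prems]) (simp add: less_Suc_eq_le)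
  also have "\<dots> < (2 * growth) ^ Suc l"
    using growth_pos unfolding power_Suc Z by simp
  finally show ?case .
qed

lemma formula_size_and_formula: "formula_size (and_formula L) \<le> card P * m * (2 * growth) ^ L"
proof -
  have "formula_size (and_formula L) = Suc (\<Sum>r\<in>P. crt_weight P r * lform_size (level_form L 0 r))"
    unfolding and_formula_def formula_size_mod_gate lform_size_Sum[OF finite_P]
    by (simp add: lform_size_scale)
  also have "\<dots> \<le> card P * m * (2 * growth) ^ L"
  proof (rule Suc_leI)
    have "(\<Sum>r\<in>P. crt_weight P r * lform_size (level_form L 0 r)) \<le> (\<Sum>r\<in>P. m * lform_size (level_form L 0 r))"
      using crt_weight_le_m[OF subset_refl] by (intro sum_mono mult_le_mono1)
    also have "\<dots> < (\<Sum>r\<in>P. m * (2 * growth) ^ L)"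
      using finite_P card_P m_pos lform_size_level_form by (intro sum_strict_mono) auto
    also have "\<dots> = card P * m * (2 * growth) ^ L" by simp
    finally show "(\<Sum>r\<in>P. crt_weight P r * lform_size (level_form L 0 r)) < card P * m * (2 * growth) ^ L" .
  qed
  finally show ?thesis .
qed

lemma card_P_le_m: "card P \<le> m"
proof -
  have "P \<subseteq> {1..m}" using P_le_m P_prime prime_ge_1_nat by auto
  then show ?thesis using card_mono[of "{1..m}" P] by simp
qed

lemma growth_le_power:
  assumes X: "2 \<le> X" "m \<le> X" "d_max \<le> X" and B: "B \<le> X ^ card P"
  shows "growth \<le> X ^ (6 + card P + 2 * card P * d_max)"
proof -
  define w where "w = card P"
  have X1: "m \<le> X ^ 1" "d_max \<le> X ^ 1" "w \<le> X ^ 1" "2 \<le> X ^ 1"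
    using X card_P_le_m unfolding w_def by simp_all
  have a: "d_max * B ^ d_max \<le> X ^ (1 + w * d_max)"
    using X1(2) power_le_power_mult[OF B, of d_max] unfolding w_def by (rule mult_le_power_add)
  have b: "(2 * m ^ d_max) ^ w \<le> X ^ ((1 + d_max) * w)"
    using power_le_power_mult[OF mult_le_power_add[OF X1(4) power_le_power_mult[OF X1(1), of d_max]], of w]
    by simp
  have c: "w * d_max * m * m \<le> X ^ (1 + 1 + 1 + 1)"
    using X1 by (intro mult_le_power_add)
  have "growth \<le> X ^ (1 + (1 + w * d_max) + (1 + d_max) * w + (1 + 1 + 1 + 1))"
    unfolding growth_def w_def[symmetric]
    by (rule mult_le_power_add[OF mult_le_power_add[OF mult_le_power_add[OF X1(1) a] b] c])
  also have "\<dots> = X ^ (6 + w + 2 * w * d_max)"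
    by (intro arg_cong[where f="(^) X"]) (simp add: algebra_simps)
  finally show ?thesis unfolding w_def .
qed

lemma formula_size_and_formula_le_power:
  assumes "2 \<le> X" "m \<le> X" "d_max \<le> X" "B \<le> X ^ card P"
  shows "formula_size (and_formula L) \<le> X ^ (2 + L * (7 + card P + 2 * card P * d_max))"
proof -
  have "2 * growth \<le> X ^ (1 + (6 + card P + 2 * card P * d_max))"
    using assms(1) growth_le_power[OF assms] by (intro mult_le_power_add) auto
  then have "(2 * growth) ^ L \<le> X ^ ((1 + (6 + card P + 2 * card P * d_max)) * L)"
    by (rule power_le_power_mult)
  also have "\<dots> = X ^ (L * (7 + card P + 2 * card P * d_max))"
    by (simp add: algebra_simps)
  finally have "(2 * growth) ^ L \<le> X ^ (L * (7 + card P + 2 * card P * d_max))" .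
  moreover have "card P * m \<le> X ^ (1 + 1)"
    using assms(2) card_P_le_m by (intro mult_le_power_add) auto
  ultimately have "card P * m * (2 * growth) ^ L \<le> X ^ (2 + L * (7 + card P + 2 * card P * d_max))"
    using mult_le_power_add by fastforce
  then show ?thesis using formula_size_and_formula order_trans by blast
qed


lemma two_le_m: "2 \<le> m"
proof -
  obtain r where "r \<in> P" using card_P by fastforce
  then show ?thesis using P_le_m prime_ge_2_nat[OF P_prime] by fastforce
qed

lemma formula_size_and_formula_le:
  assumes s: "2 \<le> s" and D: "d_max \<le> m * s" and B: "B \<le> (m * s) ^ card P"
  shows "formula_size (and_formula L) \<le> (m * s) ^ ((2 + L * (7 + m + 2 * m * m)) * s)"
proof -
  have "2 * 1 \<le> m * s" using two_le_m s by (intro mult_le_mono) auto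
  then have X: "2 \<le> m * s" "m \<le> m * s" using s by simp_all
  have "formula_size (and_formula L) \<le> (m * s) ^ (2 + L * (7 + card P + 2 * card P * d_max))"
    by (rule formula_size_and_formula_le_power[OF X D B])
  also have "\<dots> \<le> (m * s) ^ ((2 + L * (7 + m + 2 * m * m)) * s)"
  proof (rule power_increasing)
    have "2 * card P * d_max \<le> 2 * m * (m * s)"
      using card_P_le_m D by (intro mult_le_mono) auto
    moreover have "card P \<le> m * s" using card_P_le_m X(2) by linarith
    ultimately have "7 + card P + 2 * card P * d_max \<le> 7 * s + m * s + 2 * m * m * s"
      using s by (simp add: mult.assoc)
    then have "L * (7 + card P + 2 * card P * d_max) \<le> L * (7 * s + m * s + 2 * m * m * s)"
      by (rule mult_le_mono2)
    then show "2 + L * (7 + card P + 2 * card P * d_max) \<le> (2 + L * (7 + m + 2 * m * m)) * s"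
      using s by (simp add: algebra_simps)
  qed (use two_le_m s in simp)
  finally show ?thesis .
qed

end

section \<open>Choice of the parameters\<close>

definition least_power_above :: "nat \<Rightarrow> nat \<Rightarrow> nat" where
  "least_power_above s r = r ^ (LEAST t. s \<le> r ^ t)"

lemma least_power_above: "2 \<le> r \<Longrightarrow> s \<le> least_power_above s r"
  unfolding least_power_above_def
  by (rule LeastI[of _ s]) (meson le_trans less_exp power_mono less_imp_le zero_le)

lemma least_power_above_le: "2 \<le> r \<Longrightarrow> 1 \<le> s \<Longrightarrow> least_power_above s r \<le> r * s"
proof -
  assume r: "2 \<le> r" and s: "1 \<le> s"
  define t where "t = (LEAST t. s \<le> r ^ t)"
  show ?thesis
  proof (cases t)
    case 0
    then show ?thesis unfolding least_power_above_def t_def[symmetric] using r s by simp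
  next
    case (Suc t')
    then have "\<not> s \<le> r ^ t'" unfolding t_def by (metis lessI not_less_Least)
    then show ?thesis unfolding least_power_above_def t_def[symmetric] Suc by simp
  qed
qed

definition binomial_coeffs :: "(nat \<Rightarrow> int) \<Rightarrow> nat \<Rightarrow> nat \<Rightarrow> int" where
  "binomial_coeffs g M = (SOME c. \<forall>N < M. g N = (\<Sum>j<M. c j * int (N choose j)))"

lemma binomial_coeffs: "N < M \<Longrightarrow> g N = (\<Sum>j<M. binomial_coeffs g M j * int (N choose j))"
  using someI_ex[OF binomial_interpolation[of M g]] unfolding binomial_coeffs_def by blast

lemma AND_construction_prime_factors:
  fixes m n s :: nat
  assumes m: "1 \<le> m" and omega: "2 \<le> omega m" and n: "1 \<le> n" and s: "2 \<le> s"
  defines "B \<equiv> s ^ (omega m - 1) - 1" and "d \<equiv> least_power_above s"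
  shows "AND_construction m n B (prime_factors m) d
           (\<lambda>r. binomial_coeffs (\<lambda>N. if N mod d r = B mod d r then 0 else 1) (d r))"
proof
  have "s ^ 1 \<le> s ^ (omega m - 1)" using omega s by (intro power_increasing) auto
  then have B: "B < s ^ (omega m - 1)" "1 \<le> B" using s unfolding B_def by auto
  then show "1 \<le> B" by simp
  fix T assume T: "T \<subseteq> prime_factors m" "card (prime_factors m) \<le> card T + 1"
  have "s ^ (omega m - 1) \<le> s ^ card T" using T(2) s by (intro power_increasing) (auto simp: omega_def)
  also have "\<dots> = (\<Prod>r\<in>T. s)" by simp
  also have "\<dots> \<le> (\<Prod>r\<in>T. d r)"
    using T(1) prime_ge_2_nat least_power_above unfolding d_def
    by (intro prod_mono) (auto simp: in_prime_factors_iff subset_iff)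
  finally show "B < (\<Prod>r\<in>T. d r)" using B by linarith
qed (use m omega n binomial_coeffs in \<open>auto simp: omega_def in_prime_factors_iff d_def least_power_above_def\<close>)

lemma AND_circuit_exists:
  fixes m n s L :: nat
  assumes m: "1 \<le> m" and omega: "2 \<le> omega m" and n: "1 \<le> n" and s: "2 \<le> s"
    and n_le: "n \<le> (s ^ (omega m - 1) - 1) ^ L"
  shows "\<exists>C. CC_circuit (Suc L) m n C \<and> computes_AND m n C \<and>
     circ_size C \<le> (m * s) ^ ((2 + L * (7 + m + 2 * m * m)) * s)"
proof -
  define B where "B = s ^ (omega m - 1) - 1"
  interpret AND_construction m n B "prime_factors m" "least_power_above s"
    "\<lambda>r. binomial_coeffs (\<lambda>N. if N mod least_power_above s r = B mod least_power_above s r then 0 else 1)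
       (least_power_above s r)"
    unfolding B_def by (rule AND_construction_prime_factors[OF m omega n s])
  have "least_power_above s r \<le> m * s" if "r \<in> prime_factors m" for r
  proof -
    have "least_power_above s r \<le> r * s"
      using least_power_above_le prime_ge_2_nat[OF P_prime[OF that]] s by simp
    also have "\<dots> \<le> m * s" using P_le_m[OF that] by simp
    finally show ?thesis .
  qed
  then have "d_max \<le> m * s" unfolding d_max_def using finite_P card_P by (intro Max.boundedI) auto
  moreover have "B \<le> (m * s) ^ card (prime_factors m)"
  proof -
    have "B \<le> s ^ (omega m - 1)" unfolding B_def by simp
    also have "\<dots> \<le> (m * s) ^ (omega m - 1)" using m by (intro power_mono) auto
    also have "\<dots> \<le> (m * s) ^ card (prime_factors m)"
      using m s by (intro power_increasing) (simp_all add: omega_def)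
    finally show ?thesis .
  qed
  ultimately have size: "formula_size (and_formula L) \<le> (m * s) ^ ((2 + L * (7 + m + 2 * m * m)) * s)"
    by (rule formula_size_and_formula_le[OF s])
  have "is_gate (and_formula L)" "formula_vars (and_formula L) \<subseteq> {..<n}"
    "formula_depth (and_formula L) \<le> Suc L"
    using and_formula_wf by auto
  note compile = compile_correct[OF m_pos this]
  show ?thesis
  proof (intro exI conjI)
    show "CC_circuit (Suc L) m n (compile m (and_formula L))" by (rule compile(1))
    show "computes_AND m n (compile m (and_formula L))"
      using compile(2) eval_and_formula block_and_iff_all n_le
      unfolding computes_AND_def B_def by auto
    show "circ_size (compile m (and_formula L)) \<le> (m * s) ^ ((2 + L * (7 + m + 2 * m * m)) * s)"
      using compile(3) size by simp
  qed
qed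

lemma le_power_minus_one_power:
  fixes n s w L :: nat
  assumes s: "2 \<le> s" and w: "1 \<le> w" and n: "2 ^ (w * L) * n \<le> s ^ (w * L)"
  shows "n \<le> (s ^ w - 1) ^ L"
proof -
  have "s ^ 1 \<le> s ^ w" using s w by (intro power_increasing) auto
  then have a: "2 \<le> s ^ w" using s by simp
  have "2 ^ L * n \<le> 2 ^ (w * L) * n" using w by (intro mult_le_mono power_increasing) auto
  also have "\<dots> \<le> (s ^ w) ^ L" using n by (simp add: power_mult)
  also have "\<dots> \<le> (2 * (s ^ w - 1)) ^ L" using a by (intro power_mono) auto
  also have "\<dots> = 2 ^ L * (s ^ w - 1) ^ L" by (simp add: power_mult_distrib)
  finally show ?thesis by simp
qed

lemma block_base_choice:
  fixes n E :: nat
  assumes n: "1 \<le> n" and E: "1 \<le> E"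
  obtains s where "2 \<le> s" and "real s \<le> 4 * real n powr (1 / real E)"
    and "2 ^ E * n \<le> s ^ E"
proof
  define y where "y = real n powr (1 / real E)"
  have y1: "1 \<le> y" unfolding y_def using n by (intro ge_one_powr_ge_zero) auto
  show "2 \<le> 2 * nat \<lceil>y\<rceil>" "real (2 * nat \<lceil>y\<rceil>) \<le> 4 * real n powr (1 / real E)"
    using y1 unfolding y_def by linarith+
  have "y ^ E = real n"
    unfolding y_def using n E by (simp add: powr_realpow[symmetric] powr_powr)
  then have "real (2 ^ E * n) = (2 * y) ^ E" by (simp add: power_mult_distrib)
  also have "\<dots> \<le> real (2 * nat \<lceil>y\<rceil>) ^ E" using y1 by (intro power_mono) linarith+
  finally show "2 ^ E * n \<le> (2 * nat \<lceil>y\<rceil>) ^ E" by (simp only: of_nat_le_iff of_nat_power[symmetric])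
qed

lemma nat_power_le_two_powr:
  fixes X K s n :: nat and y D :: real
  assumes X: "1 \<le> X" "real X \<le> real n ^ 2" and s: "real s \<le> 4 * y" and y: "y \<le> real n powr (1 / D)"
    and n: "1 \<le> n"
  shows "real (X ^ (K * s)) \<le> 2 powr ((8 * real K / ln 2) * real n powr (1 / D) * ln (real n))"
proof -
  have "ln (real X) \<le> ln (real n ^ 2)" using X n by (subst ln_le_cancel_iff) auto
  then have lnX: "ln (real X) \<le> 2 * ln (real n)" using n by (simp add: ln_realpow)
  have "real s \<le> 4 * real n powr (1 / D)" using s y by linarith
  then have "real K * real s \<le> real K * (4 * real n powr (1 / D))" by (intro mult_left_mono) auto
  then have "real (K * s) \<le> 4 * real K * real n powr (1 / D)" by simp
  moreover have "0 \<le> ln (real X)" using X by simp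
  ultimately have "real (K * s) * ln (real X) \<le> (4 * real K * real n powr (1 / D)) * (2 * ln (real n))"
    using lnX by (intro mult_mono) auto
  then have "exp (real (K * s) * ln (real X))
      \<le> exp (((8 * real K / ln 2) * real n powr (1 / D) * ln (real n)) * ln 2)"
    by (simp add: field_simps)
  moreover have "real (X ^ (K * s)) = exp (real (K * s) * ln (real X))"
    using X by (simp add: powr_realpow[symmetric] powr_def)
  ultimately show ?thesis by (simp add: powr_def mult.commute)
qed

lemma AND_circuit_size_powr:
  fixes m n L :: nat and D :: real
  assumes m: "1 \<le> m" and omega: "2 \<le> omega m" and L: "1 \<le> L" and n: "4 * m \<le> n"
    and D: "0 < D" "D \<le> real ((omega m - 1) * L)"
  defines "K \<equiv> 2 + L * (7 + m + 2 * m * m)"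
  shows "\<exists>C. CC_circuit (Suc L) m n C \<and> computes_AND m n C \<and>
     real (circ_size C) \<le> 2 powr ((8 * real K / ln 2) * real n powr (1 / D) * ln (real n))"
proof -
  define E where "E = (omega m - 1) * L"
  have n1: "1 \<le> n" "1 \<le> real n" using n m by auto
  have E1: "1 \<le> E" unfolding E_def using omega L by simp
  obtain s where s: "2 \<le> s" "real s \<le> 4 * real n powr (1 / real E)" "2 ^ E * n \<le> s ^ E"
    using block_base_choice[OF n1(1) E1] .
  have "n \<le> (s ^ (omega m - 1) - 1) ^ L"
    using le_power_minus_one_power[OF s(1) _ s(3)[unfolded E_def]] omega by simp
  then obtain C where C: "CC_circuit (Suc L) m n C" "computes_AND m n C" "circ_size C \<le> (m * s) ^ (K * s)"
    using AND_circuit_exists[OF m omega n1(1) s(1)] unfolding K_def by blast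
  have y: "real n powr (1 / real E) \<le> real n powr (1 / D)"
    using n1 D E1 unfolding E_def by (intro powr_mono) (auto simp: frac_le)
  have "real n powr (1 / real E) \<le> real n powr 1"
    using n1 E1 by (intro powr_mono) auto
  then have "real s \<le> 4 * real n" using s(2) n1 by simp
  then have "real (m * s) \<le> real m * (4 * real n)" by (simp add: mult_left_mono)
  also have "\<dots> \<le> real n ^ 2" using n n1 by (simp add: power2_eq_square mult_right_mono)
  finally have X: "real (m * s) \<le> real n ^ 2" .
  have "1 \<le> m * s" using m s(1) by simp
  have "real (circ_size C) \<le> real ((m * s) ^ (K * s))" using C(3) by (simp only: of_nat_le_iff)
  also have "\<dots> \<le> 2 powr ((8 * real K / ln 2) * real n powr (1 / D) * ln (real n))"
    by (rule nat_power_le_two_powr[OF \<open>1 \<le> m * s\<close> X s(2) y n1(1)])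
  finally show ?thesis using C by blast
qed

lemma one_le_varpi:
  assumes "2 \<le> omega m"
  shows "1 \<le> varpi m"
proof -
  define M where "M = Max (prime_factors m)"
  have "prime_factors m \<noteq> {}" using assms unfolding omega_def by auto
  then have M: "M \<in> prime_factors m" unfolding M_def by simp
  have "prime_factors m \<subseteq> {2..M}"
    using prime_ge_2_nat unfolding M_def by (auto simp: in_prime_factors_iff)
  then have "omega m \<le> M - 1" unfolding omega_def using card_mono[of "{2..M}"] by fastforce
  then have "M \<in> {p \<in> prime_factors m. p \<ge> omega m}" using M by simp
  moreover have "finite {p \<in> prime_factors m. p \<ge> omega m}" by simp
  ultimately have "card {p \<in> prime_factors m. p \<ge> omega m} \<noteq> 0" by (metis card_0_eq empty_iff)
  then show ?thesis unfolding varpi_def by linarith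
qed

lemma varpi_le_omega: "varpi m \<le> omega m"
  unfolding varpi_def omega_def by (intro card_mono) auto

theorem proposition4p3:
  fixes h m :: nat
  assumes "h \<ge> 3" and "m \<ge> 1" and "omega m \<ge> 2"
  shows "\<exists>c > (0::real). \<exists>N::nat. \<forall>n \<ge> N. \<exists>C.
           CC_circuit h m n C \<and> computes_AND m n C \<and>
           real (circ_size C) \<le> 2 powr (c * (real n powr
              (1 / (real ((omega m - 1) * (h - 2)) + real (varpi m) - 1))) * ln (real n))"
proof -
  define D where "D = real ((omega m - 1) * (h - 2)) + real (varpi m) - 1"
  define K where "K = 2 + (h - 1) * (7 + m + 2 * m * m)"
  have "0 < K" unfolding K_def by simp
  then have c: "0 < 8 * real K / ln 2" by (intro divide_pos_pos) auto
  have "1 * 1 \<le> (omega m - 1) * (h - 2)" using assms by (intro mult_le_mono) auto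
  then have "0 < D" unfolding D_def using one_le_varpi[OF assms(3)] by linarith
  have "h - 1 = Suc (h - 2)" using assms(1) by simp
  then have "(omega m - 1) * (h - 1) = (omega m - 1) * (h - 2) + (omega m - 1)" by simp
  then have "D \<le> real ((omega m - 1) * (h - 1))"
    unfolding D_def using varpi_le_omega[of m] assms(3) by (simp add: of_nat_diff)
  moreover have "1 \<le> h - 1" "Suc (h - 1) = h" using assms(1) by auto
  ultimately have "\<exists>C. CC_circuit h m n C \<and> computes_AND m n C \<and>
      real (circ_size C) \<le> 2 powr ((8 * real K / ln 2) * real n powr (1 / D) * ln (real n))"
    if "4 * m \<le> n" for n
    using AND_circuit_size_powr[OF assms(2,3) _ that \<open>0 < D\<close>, of "h - 1"] unfolding K_def by simp
  then show ?thesis using c unfolding D_def by blast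
qed

end
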